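(* Let $(M,d)$ be a complete metric space and $X\subseteq M$ compact. Assume that every $\mu\in P(X)$ admits a barycenter in $M$, and that the barycentric convex hull $Y=conv(X)$ is compact. Then there exists a circumcenter $\nu\in P(M)$ of $i(X)$ in $(P(M),W_2)$, and the square $R^2$ of the circumradius $R$ of $i(X)$ equals both $\max_{\mu\in P(X)}Var(\mu)$ and $\min_{\bar\nu\in P(Y)}AVar(\bar\nu)$. Furthermore, any $\bar\mu\in P(X)$ maximizing the variance satisfies $W_2(\delta_x,\nu)=R$ for $\bar\mu$-almost every $x$, and if $\bar\nu$ is any other circumcenter of $i(X)$, then also $W_2(\delta_x,\bar\nu)=R$ for $\bar\mu$-almost every $x$.
   Context: $P(\cdot)$ denotes Borel probability measures. For $\mu\in P(X)$, $Var(\mu)=\inf_{y\in M}\int_X d^2(x,y)\,d\mu(x)$, and a barycenter of $\mu$ is a point $y\in M$ attaining this infimum. $conv(X)$ is the set of all barycenters in $M$ of measures $\mu\in P(X)$. For $\bar\nu\in P(Y)$, $AVar(\bar\nu)=\max_{x\in X}\int_Y d^2(x,y)\,d\bar\nu(y)$. $W_2$ is the Wasserstein distance on $P(M)$: $W_2^2(\mu,\nu)=\inf_\gamma\int_{M\times M}d^2(x,y)\,d\gamma(x,y)$ over couplings $\gamma$ of $\mu,\nu$; in particular $W_2^2(\delta_x,\nu)=\int_M d^2(x,y)\,d\nu(y)$. The map $i:X\to P(M)$ is $i(x)=\delta_x$. The circumradius of $i(X)$ is $\inf_{\nu\in P(M)}\sup_{x\in X}W_2(\delta_x,\nu)$,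 and a circumcenter of $i(X)$ is a $\nu\in P(M)$ with $\sup_{x\in X}W_2(\delta_x,\nu)$ equal to this circumradius. *)

theory Defs
  imports "HOL-Probability.Probability"
begin

text \<open>Borel probability measures on the (complete metric) space M, modelled as the type 'a.\<close>
definition PM :: "'a::metric_space measure set" where
  "PM = {\<mu>. prob_space \<mu> \<and> sets \<mu> = sets borel}"

text \<open>P(X), identified with the Borel probability measures on M concentrated on X.\<close>
definition PX :: "'a::metric_space set \<Rightarrow> 'a measure set" where
  "PX X = {\<mu> \<in> PM. emeasure \<mu> X = 1}"

definition Var :: "'a::metric_space measure \<Rightarrow> real" where
  "Var \<mu> = (INF y. \<integral>x. (dist x y)\<^sup>2 \<partial>\<mu>)"

definition barycenter :: "'a::metric_space measure \<Rightarrow> 'a \<Rightarrow> bool" where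
  "barycenter \<mu> y \<longleftrightarrow> (\<integral>x. (dist x y)\<^sup>2 \<partial>\<mu>) = Var \<mu>"

definition conv :: "'a::metric_space set \<Rightarrow> 'a set" where
  "conv X = {y. \<exists>\<mu>\<in>PX X. barycenter \<mu> y}"

definition AVar :: "'a::metric_space set \<Rightarrow> 'a measure \<Rightarrow> real" where
  "AVar X \<nu> = (SUP x\<in>X. \<integral>y. (dist x y)\<^sup>2 \<partial>\<nu>)"

text \<open>Squared Wasserstein distance W_2^2(delta_x, nu) = integral of d^2(x,y) d nu(y) (possibly infinite).\<close>
definition W2sq :: "'a::metric_space \<Rightarrow> 'a measure \<Rightarrow> ennreal" where
  "W2sq x \<nu> = (\<integral>\<^sup>+ y. ennreal ((dist x y)\<^sup>2) \<partial>\<nu>)"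

definition W2 :: "'a::metric_space \<Rightarrow> 'a measure \<Rightarrow> ennreal" where
  "W2 x \<nu> = (if W2sq x \<nu> = \<infinity> then \<infinity> else ennreal (sqrt (enn2real (W2sq x \<nu>))))"

definition circumradius :: "'a::metric_space set \<Rightarrow> ennreal" where
  "circumradius X = (INF \<nu>\<in>PM. SUP x\<in>X. W2 x \<nu>)"

definition circumcenter :: "'a::metric_space set \<Rightarrow> 'a measure \<Rightarrow> bool" where
  "circumcenter X \<nu> \<longleftrightarrow> \<nu> \<in> PM \<and> (SUP x\<in>X. W2 x \<nu>) = circumradius X"

end

theory Submission
  imports Defs
begin

text \<open>
  Weak duality: for \<open>\<mu> \<in> P(X)\<close> and \<open>\<nu> \<in> P(M)\<close>, Fubini gives
  \<open>Var \<mu> \<le> \<integral> W\<^sub>2\<^sup>2(\<delta>\<^sub>x, \<nu>) d\<mu>(x) \<le> sup\<^sub>x\<^sub>\<in>\<^sub>X W\<^sub>2\<^sup>2(\<delta>\<^sub>x, \<nu>)\<close>, so \<open>Var \<mu> \<le> R\<^sup>2\<close> and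
  \<open>Var \<mu> \<le> AVar \<nu>\<close>. For the converse, consider the zero-sum game in which one player
  picks \<open>x \<in> X\<close>, the other \<open>y \<in> Y = conv X\<close>, with payoff \<open>d\<^sup>2(x, y)\<close>. A minimax theorem
  for continuous payoffs (von Neumann's theorem on finer and finer finite nets, and a
  compactness argument realizing the mixed strategies as almost everywhere convergent
  random variables on \<open>[0,1)\<close>) yields \<open>\<mu>' \<in> P(X)\<close>, \<open>\<nu>' \<in> P(Y)\<close> and a value \<open>\<lambda>\<close> with
  \<open>\<integral> d\<^sup>2(x, y) d\<mu>'(x) \<ge> \<lambda> \<ge> \<integral> d\<^sup>2(x, y) d\<nu>'(y)\<close> for all \<open>y \<in> Y\<close> and \<open>x \<in> X\<close>. Taking
  for \<open>y\<close> the barycenter of \<open>\<mu>'\<close> gives \<open>\<lambda> \<le> Var \<mu>'\<close>, so \<open>W\<^sub>2\<^sup>2(\<delta>\<^sub>x, \<nu>') \<le> Var \<mu>'\<close> on \<open>X\<close>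
  and all the inequalities above become equalities. Finally, for a maximizer \<open>\<mu>\<close> of the
  variance and a circumcenter \<open>\<nu>\<close>, equality in \<open>Var \<mu> \<le> \<integral> W\<^sub>2\<^sup>2(\<delta>\<^sub>x, \<nu>) d\<mu>(x) \<le> R\<^sup>2\<close>
  forces \<open>W\<^sub>2(\<delta>\<^sub>x, \<nu>) = R\<close> for \<open>\<mu>\<close>-almost every \<open>x\<close>.
\<close>

section \<open>Von Neumann's minimax theorem for finite games\<close>

definition prob_vectors :: "'i set \<Rightarrow> ('i \<Rightarrow> real) set" where
  "prob_vectors A = {x. (\<forall>a. 0 \<le> x a) \<and> (\<forall>a. a \<notin> A \<longrightarrow> x a = 0) \<and> sum x A = 1}"

definition min_payoff :: "'i set \<Rightarrow> 'j set \<Rightarrow> ('i \<Rightarrow> 'j \<Rightarrow> real) \<Rightarrow> ('i \<Rightarrow> real) \<Rightarrow> real" where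
  "min_payoff A B c x = Min ((\<lambda>b. \<Sum>a\<in>A. x a * c a b) ` B)"

definition max_payoff :: "'i set \<Rightarrow> 'j set \<Rightarrow> ('i \<Rightarrow> 'j \<Rightarrow> real) \<Rightarrow> ('j \<Rightarrow> real) \<Rightarrow> real" where
  "max_payoff A B c y = Max ((\<lambda>a. \<Sum>b\<in>B. y b * c a b) ` A)"

definition has_game_value :: "'i set \<Rightarrow> 'j set \<Rightarrow> ('i \<Rightarrow> 'j \<Rightarrow> real) \<Rightarrow> bool" where
  "has_game_value A B c \<longleftrightarrow> (\<exists>l. \<exists>x\<in>prob_vectors A. \<exists>y\<in>prob_vectors B.
     (\<forall>b\<in>B. l \<le> (\<Sum>a\<in>A. x a * c a b)) \<and> (\<forall>a\<in>A. (\<Sum>b\<in>B. y b * c a b) \<le> l))"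

lemma prob_vectors_eq:
  assumes "finite A"
  shows "prob_vectors A = Pi\<^sub>E UNIV (\<lambda>i. if i \<in> A then {0..1::real} else {0}) \<inter> {x. sum x A = 1}"
proof (intro set_eqI iffI)
  fix x assume x: "x \<in> prob_vectors A"
  have "x a \<le> 1" if "a \<in> A" for a
  proof -
    have "x a \<le> sum x A" using x that assms
      by (intro member_le_sum) (auto simp: prob_vectors_def)
    then show ?thesis using x by (simp add: prob_vectors_def)
  qed
  then show "x \<in> Pi\<^sub>E UNIV (\<lambda>i. if i \<in> A then {0..1::real} else {0}) \<inter> {x. sum x A = 1}"
    using x by (auto simp: prob_vectors_def PiE_def Pi_def)
qed (auto simp: prob_vectors_def PiE_def Pi_def split: if_splits)

lemma compact_PiE_Icc01:
  "compact (Pi\<^sub>E UNIV (\<lambda>i. if i \<in> A then {0..1::real} else {0}))"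
proof -
  have "compactin (product_topology (\<lambda>i. euclidean) UNIV)
      (Pi\<^sub>E UNIV (\<lambda>i. if i \<in> A then {0..1::real} else {0}))"
    by (auto simp: compactin_PiE)
  then show ?thesis by (simp add: euclidean_product_topology)
qed

lemma compact_prob_vectors: "finite A \<Longrightarrow> compact (prob_vectors A)"
  unfolding prob_vectors_eq
  by (intro compact_Int_closed compact_PiE_Icc01 closed_Collect_eq continuous_intros
      continuous_on_sum continuous_on_product_coordinates)

lemma prob_vectors_indicator: "a \<in> A \<Longrightarrow> finite A \<Longrightarrow> (\<lambda>b. if b = a then 1 else 0) \<in> prob_vectors A"
  by (auto simp: prob_vectors_def)

lemma prob_vectors_mono:
  assumes "y \<in> prob_vectors B'" "B' \<subseteq> B" "finite B"
  shows "y \<in> prob_vectors B"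
proof -
  have "sum y B' = sum y B"
    by (rule sum.mono_neutral_left) (use assms in \<open>auto simp: prob_vectors_def\<close>)
  then show ?thesis using assms by (auto simp: prob_vectors_def)
qed

lemma sum_prob_vectors_extend:
  assumes "y \<in> prob_vectors B'" "B' \<subseteq> B" "finite B"
  shows "(\<Sum>b\<in>B. y b * f b) = (\<Sum>b\<in>B'. y b * f b)"
  by (rule sum.mono_neutral_right) (use assms in \<open>auto simp: prob_vectors_def\<close>)

lemma abs_sum_prob_vectors_le:
  fixes f :: "'i \<Rightarrow> real"
  assumes "y \<in> prob_vectors A" "finite A" "\<And>a. a \<in> A \<Longrightarrow> \<bar>f a\<bar> \<le> B"
  shows "\<bar>\<Sum>a\<in>A. y a * f a\<bar> \<le> B"
proof -
  have "\<bar>\<Sum>a\<in>A. y a * f a\<bar> \<le> (\<Sum>a\<in>A. y a * B)"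
    using assms by (intro order_trans[OF sum_abs] sum_mono)
      (auto simp: prob_vectors_def abs_mult intro: mult_left_mono)
  also have "\<dots> = B" using assms(1) by (simp add: prob_vectors_def sum_distrib_right[symmetric])
  finally show ?thesis .
qed

lemma continuous_on_Min_finite:
  fixes f :: "'b \<Rightarrow> 'x::topological_space \<Rightarrow> real"
  assumes "finite B" "B \<noteq> {}" "\<And>b. b \<in> B \<Longrightarrow> continuous_on S (f b)"
  shows "continuous_on S (\<lambda>x. Min ((\<lambda>b. f b x) ` B))"
  using assms
proof (induction B rule: finite_ne_induct)
  case (insert b F)
  have "(\<lambda>x. Min ((\<lambda>b. f b x) ` insert b F)) = (\<lambda>x. min (f b x) (Min ((\<lambda>b. f b x) ` F)))"
    using insert by (auto simp: Min_insert)
  then show ?case using insert by (auto intro!: continuous_on_min)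
qed simp

lemma continuous_on_min_payoff:
  "finite B \<Longrightarrow> B \<noteq> {} \<Longrightarrow> continuous_on S (min_payoff A B c)"
  unfolding min_payoff_def
  by (rule continuous_on_Min_finite[where f = "\<lambda>b x. \<Sum>a\<in>A. x a * c a b"])
     (auto intro!: continuous_intros continuous_on_sum
       continuous_on_subset[OF continuous_on_product_coordinates])

lemma min_payoff_le: "finite B \<Longrightarrow> b \<in> B \<Longrightarrow> min_payoff A B c x \<le> (\<Sum>a\<in>A. x a * c a b)"
  unfolding min_payoff_def by auto

lemma le_max_payoff: "finite A \<Longrightarrow> a \<in> A \<Longrightarrow> (\<Sum>b\<in>B. y b * c a b) \<le> max_payoff A B c y"
  unfolding max_payoff_def by auto

lemma min_payoff_transpose:
  assumes "finite A" "A \<noteq> {}"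
  shows "min_payoff B A (\<lambda>b a. - c a b) y = - max_payoff A B c y"
proof -
  have "- Max ((\<lambda>a. \<Sum>b\<in>B. y b * c a b) ` A) = Min (uminus ` (\<lambda>a. \<Sum>b\<in>B. y b * c a b) ` A)"
    using assms by simp
  then show ?thesis
    unfolding min_payoff_def max_payoff_def by (simp add: sum_negf image_image)
qed

lemma max_payoff_transpose:
  assumes "finite B" "B \<noteq> {}"
  shows "max_payoff B A (\<lambda>b a. - c a b) x = - min_payoff A B c x"
  using min_payoff_transpose[OF assms, of A "\<lambda>b a. - c a b" x] by simp

lemma has_game_value_transpose:
  assumes "has_game_value A B c"
  shows "has_game_value B A (\<lambda>b a. - c a b)"
proof -
  obtain l x y where "x \<in> prob_vectors A" "y \<in> prob_vectors B"
    "\<forall>b\<in>B. l \<le> (\<Sum>a\<in>A. x a * c a b)" "\<forall>a\<in>A. (\<Sum>b\<in>B. y b * c a b) \<le> l"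
    using assms unfolding has_game_value_def by blast
  then show ?thesis unfolding has_game_value_def
    by (intro exI[of _ "- l"] bexI[of _ y] bexI[of _ x]) (auto simp: sum_negf)
qed

lemma game_value_bounded:
  fixes c :: "'i \<Rightarrow> 'j \<Rightarrow> real"
  assumes "finite A" "A \<noteq> {}" "finite B" "B \<noteq> {}"
    and x: "x \<in> prob_vectors A" and y: "y \<in> prob_vectors B"
    and x_ge: "\<forall>b\<in>B. l \<le> (\<Sum>a\<in>A. x a * c a b)" and y_le: "\<forall>a\<in>A. (\<Sum>b\<in>B. y b * c a b) \<le> l"
    and C: "\<And>a b. a \<in> A \<Longrightarrow> b \<in> B \<Longrightarrow> \<bar>c a b\<bar> \<le> C"
  shows "l \<in> {-C..C}"
proof -
  obtain a b where a: "a \<in> A" and b: "b \<in> B" using assms(2,4) by blast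
  have "\<bar>\<Sum>b\<in>B. y b * c a b\<bar> \<le> C"
    by (rule abs_sum_prob_vectors_le[OF y assms(3)]) (rule C[OF a])
  moreover have "\<bar>\<Sum>a\<in>A. x a * c a b\<bar> \<le> C"
    by (rule abs_sum_prob_vectors_le[OF x assms(1)]) (rule C[OF _ b])
  ultimately show ?thesis using x_ge y_le a b by (force simp: abs_le_iff)
qed

lemma payoff_mix:
  fixes c :: "'i \<Rightarrow> 'j \<Rightarrow> real"
  shows "(\<Sum>a\<in>A. ((1 - t) * x a + t * w a) * c a b)
     = (1 - t) * (\<Sum>a\<in>A. x a * c a b) + t * (\<Sum>a\<in>A. w a * c a b)"
proof -
  have "(\<Sum>a\<in>A. ((1 - t) * x a + t * w a) * c a b)
      = (\<Sum>a\<in>A. (1 - t) * (x a * c a b) + t * (w a * c a b))"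
    by (intro sum.cong refl) (simp add: distrib_right mult.assoc)
  then show ?thesis by (simp add: sum.distrib sum_distrib_left)
qed

lemma prob_vectors_mix:
  assumes "x \<in> prob_vectors A" "w \<in> prob_vectors A" "0 \<le> t" "t \<le> 1"
  shows "(\<lambda>a. (1 - t) * x a + t * w a) \<in> prob_vectors A"
proof -
  have "(\<Sum>a\<in>A. (1 - t) * x a + t * w a) = (1 - t) * sum x A + t * sum w A"
    by (simp add: sum.distrib sum_distrib_left)
  then show ?thesis using assms unfolding prob_vectors_def by auto
qed

text \<open>A small enough weight on \<open>w\<close> keeps the payoff against \<open>b\<^sub>0\<close> above \<open>m\<close>,
  and any positive weight lifts the others strictly above \<open>m\<close>.\<close>
lemma ex_mix_above:
  assumes x: "x \<in> prob_vectors A" and w: "w \<in> prob_vectors A" and "b\<^sub>0 \<in> B"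
    and x_ge: "\<And>b. b \<in> B \<Longrightarrow> m \<le> (\<Sum>a\<in>A. x a * c a b)"
    and x_gt: "m < (\<Sum>a\<in>A. x a * c a b\<^sub>0)"
    and w_gt: "\<And>b. b \<in> B \<Longrightarrow> b \<noteq> b\<^sub>0 \<Longrightarrow> m < (\<Sum>a\<in>A. w a * c a b)"
  shows "\<exists>x'\<in>prob_vectors A. \<forall>b\<in>B. m < (\<Sum>a\<in>A. x' a * c a b)"
proof -
  define s where "s b = (\<Sum>a\<in>A. x a * c a b)" for b
  define s' where "s' b = (\<Sum>a\<in>A. w a * c a b)" for b
  define \<delta> where "\<delta> = s b\<^sub>0 - m"
  define e where "e = \<bar>s b\<^sub>0 - s' b\<^sub>0\<bar>"
  define t where "t = \<delta> / (\<delta> + e)"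
  have \<delta>: "\<delta> > 0" and e: "e \<ge> 0" using x_gt by (auto simp: \<delta>_def e_def s_def)
  have "t * e = \<delta> * e / (\<delta> + e)" by (simp add: t_def)
  also have "\<dots> < \<delta>" using \<delta> e by (simp add: field_simps)
  finally have t: "0 < t" "t \<le> 1" "t * e < \<delta>" using \<delta> e by (auto simp: t_def)
  have "m < (1 - t) * s b + t * s' b" if "b \<in> B" for b
  proof (cases "b = b\<^sub>0")
    case True
    have "t * (s b\<^sub>0 - s' b\<^sub>0) \<le> t * e" using t by (intro mult_left_mono) (auto simp: e_def)
    then show ?thesis using True t by (simp add: \<delta>_def algebra_simps)
  next
    case False
    have "m < (1 - t) * m + t * s' b" using t w_gt[OF that False] by (simp add: s'_def algebra_simps)
    also have "\<dots> \<le> (1 - t) * s b + t * s' b"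
      using t x_ge[OF that] by (intro add_right_mono mult_left_mono) (auto simp: s_def)
    finally show ?thesis .
  qed
  then show ?thesis using prob_vectors_mix[OF x w, of t] t
    by (intro bexI[of _ "\<lambda>a. (1 - t) * x a + t * w a"]) (auto simp: payoff_mix s_def s'_def)
qed

text \<open>Loomis' induction step: removing \<open>b\<^sub>0\<close> gives a game with a value \<open>l\<close>, and
  \<open>max_payoff A B c y\<^sub>0 \<le> l\<close> because the optimal column strategy of the smaller game is
  admissible in the larger one. If \<open>min_payoff A B c x\<^sub>0 < l\<close>, mixing \<open>x\<^sub>0\<close> with the
  optimal row strategy of the smaller game would improve on \<open>x\<^sub>0\<close>.\<close>
lemma minimax_step:
  assumes fin: "finite A" "A \<noteq> {}" "finite B" "B \<noteq> {}"
    and IH: "\<And>B'. B' \<subset> B \<Longrightarrow> B' \<noteq> {} \<Longrightarrow> has_game_value A B' c"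
    and x\<^sub>0: "x\<^sub>0 \<in> prob_vectors A"
    and x\<^sub>0_opt: "\<And>x. x \<in> prob_vectors A \<Longrightarrow> min_payoff A B c x \<le> min_payoff A B c x\<^sub>0"
    and y\<^sub>0_opt: "\<And>y. y \<in> prob_vectors B \<Longrightarrow> max_payoff A B c y\<^sub>0 \<le> max_payoff A B c y"
    and b\<^sub>0: "b\<^sub>0 \<in> B" "min_payoff A B c x\<^sub>0 < (\<Sum>a\<in>A. x\<^sub>0 a * c a b\<^sub>0)"
  shows "max_payoff A B c y\<^sub>0 \<le> min_payoff A B c x\<^sub>0"
proof (cases "B = {b\<^sub>0}")
  case True
  then show ?thesis using b\<^sub>0 by (simp add: min_payoff_def)
next
  case False
  then have "B - {b\<^sub>0} \<subset> B" "B - {b\<^sub>0} \<noteq> {}" using b\<^sub>0(1) by auto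
  from IH[OF this] obtain l w v where w: "w \<in> prob_vectors A" and v: "v \<in> prob_vectors (B - {b\<^sub>0})"
    and w_ge: "\<forall>b\<in>B - {b\<^sub>0}. l \<le> (\<Sum>a\<in>A. w a * c a b)"
    and v_le: "\<forall>a\<in>A. (\<Sum>b\<in>B - {b\<^sub>0}. v b * c a b) \<le> l"
    unfolding has_game_value_def by blast
  have vB: "v \<in> prob_vectors B" by (rule prob_vectors_mono[OF v _ fin(3)]) auto
  have "max_payoff A B c v \<le> l"
    using fin v_le by (simp add: max_payoff_def sum_prob_vectors_extend[OF v _ fin(3)])
  then have y\<^sub>0_le: "max_payoff A B c y\<^sub>0 \<le> l" using y\<^sub>0_opt[OF vB] by linarith
  show ?thesis
  proof (rule ccontr)
    assume "\<not> ?thesis"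
    then have "min_payoff A B c x\<^sub>0 < l" using y\<^sub>0_le by linarith
    then have "\<And>b. b \<in> B \<Longrightarrow> b \<noteq> b\<^sub>0 \<Longrightarrow> min_payoff A B c x\<^sub>0 < (\<Sum>a\<in>A. w a * c a b)"
      using w_ge by force
    then obtain x where x: "x \<in> prob_vectors A"
      and "\<forall>b\<in>B. min_payoff A B c x\<^sub>0 < (\<Sum>a\<in>A. x a * c a b)"
      using ex_mix_above[where c = c, OF x\<^sub>0 w b\<^sub>0(1) min_payoff_le[OF fin(3), of _ A c x\<^sub>0] b\<^sub>0(2)] by blast
    then have "min_payoff A B c x\<^sub>0 < min_payoff A B c x"
      unfolding min_payoff_def[of A B c x] using fin by (subst Min_gr_iff) auto
    with x\<^sub>0_opt[OF x] show False by linarith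
  qed
qed

lemma ex_optimal_strategies:
  assumes "finite A" "A \<noteq> {}" "finite B" "B \<noteq> {}"
  obtains x\<^sub>0 y\<^sub>0 where "x\<^sub>0 \<in> prob_vectors A" "y\<^sub>0 \<in> prob_vectors B"
    "\<And>x. x \<in> prob_vectors A \<Longrightarrow> min_payoff A B c x \<le> min_payoff A B c x\<^sub>0"
    "\<And>y. y \<in> prob_vectors B \<Longrightarrow> max_payoff A B c y\<^sub>0 \<le> max_payoff A B c y"
proof -
  obtain a b where "a \<in> A" "b \<in> B" using assms by auto
  then have ne: "prob_vectors A \<noteq> {}" "prob_vectors B \<noteq> {}"
    using prob_vectors_indicator[OF \<open>a \<in> A\<close> assms(1)]
      prob_vectors_indicator[OF \<open>b \<in> B\<close> assms(3)] by auto
  obtain x\<^sub>0 where x\<^sub>0: "x\<^sub>0 \<in> prob_vectors A"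
    "\<And>x. x \<in> prob_vectors A \<Longrightarrow> min_payoff A B c x \<le> min_payoff A B c x\<^sub>0"
    using continuous_attains_sup[OF compact_prob_vectors[OF assms(1)] ne(1)
        continuous_on_min_payoff[OF assms(3,4), of _ A c]]
    by blast
  obtain y\<^sub>0 where y\<^sub>0: "y\<^sub>0 \<in> prob_vectors B"
    "\<And>y. y \<in> prob_vectors B \<Longrightarrow> min_payoff B A (\<lambda>b a. - c a b) y \<le> min_payoff B A (\<lambda>b a. - c a b) y\<^sub>0"
    using continuous_attains_sup[OF compact_prob_vectors[OF assms(3)] ne(2)
        continuous_on_min_payoff[OF assms(1,2), of _ B "\<lambda>b a. - c a b"]]
    by blast
  have "max_payoff A B c y\<^sub>0 \<le> max_payoff A B c y" if "y \<in> prob_vectors B" for y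
    using y\<^sub>0(2)[OF that] by (metis min_payoff_transpose[OF assms(1,2)] neg_le_iff_le)
  with x\<^sub>0 y\<^sub>0(1) that show ?thesis by blast
qed

text \<open>Both payoffs equal the expected payoff of the pair \<open>(x\<^sub>0, y\<^sub>0)\<close>.\<close>
lemma max_payoff_eq_min_payoff_if_equalizing:
  fixes c :: "'i \<Rightarrow> 'j \<Rightarrow> real"
  assumes "x\<^sub>0 \<in> prob_vectors A" "y\<^sub>0 \<in> prob_vectors B"
    and x\<^sub>0_eq: "\<And>b. b \<in> B \<Longrightarrow> (\<Sum>a\<in>A. x\<^sub>0 a * c a b) = min_payoff A B c x\<^sub>0"
    and y\<^sub>0_eq: "\<And>a. a \<in> A \<Longrightarrow> (\<Sum>b\<in>B. y\<^sub>0 b * c a b) = max_payoff A B c y\<^sub>0"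
  shows "max_payoff A B c y\<^sub>0 = min_payoff A B c x\<^sub>0"
proof -
  have "min_payoff A B c x\<^sub>0 = (\<Sum>b\<in>B. y\<^sub>0 b * (\<Sum>a\<in>A. x\<^sub>0 a * c a b))"
    using assms(2) x\<^sub>0_eq by (simp add: prob_vectors_def sum_distrib_right[symmetric])
  also have "\<dots> = (\<Sum>b\<in>B. \<Sum>a\<in>A. x\<^sub>0 a * (y\<^sub>0 b * c a b))"
    by (simp add: sum_distrib_left mult.left_commute)
  also have "\<dots> = (\<Sum>a\<in>A. x\<^sub>0 a * (\<Sum>b\<in>B. y\<^sub>0 b * c a b))"
    by (subst sum.swap) (simp add: sum_distrib_left)
  also have "\<dots> = max_payoff A B c y\<^sub>0"
    using assms(1) y\<^sub>0_eq by (simp add: prob_vectors_def sum_distrib_right[symmetric])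
  finally show ?thesis by simp
qed

lemma max_payoff_le_min_payoff_if_optimal:
  assumes fin: "finite A" "A \<noteq> {}" "finite B" "B \<noteq> {}"
    and IH_B: "\<And>B'. B' \<subset> B \<Longrightarrow> B' \<noteq> {} \<Longrightarrow> has_game_value A B' c"
    and IH_A: "\<And>A'. A' \<subset> A \<Longrightarrow> A' \<noteq> {} \<Longrightarrow> has_game_value B A' (\<lambda>b a. - c a b)"
    and x\<^sub>0: "x\<^sub>0 \<in> prob_vectors A"
    and x\<^sub>0_opt: "\<And>x. x \<in> prob_vectors A \<Longrightarrow> min_payoff A B c x \<le> min_payoff A B c x\<^sub>0"
    and y\<^sub>0: "y\<^sub>0 \<in> prob_vectors B"
    and y\<^sub>0_opt: "\<And>y. y \<in> prob_vectors B \<Longrightarrow> max_payoff A B c y\<^sub>0 \<le> max_payoff A B c y"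
  shows "max_payoff A B c y\<^sub>0 \<le> min_payoff A B c x\<^sub>0"
proof (cases "\<exists>b\<^sub>0\<in>B. min_payoff A B c x\<^sub>0 < (\<Sum>a\<in>A. x\<^sub>0 a * c a b\<^sub>0)")
  case True
  then obtain b\<^sub>0 where "b\<^sub>0 \<in> B" "min_payoff A B c x\<^sub>0 < (\<Sum>a\<in>A. x\<^sub>0 a * c a b\<^sub>0)" ..
  from minimax_step[OF fin IH_B x\<^sub>0 x\<^sub>0_opt y\<^sub>0_opt this] show ?thesis .
next
  case no_b\<^sub>0: False
  let ?c' = "\<lambda>b a. - c a b"
  show ?thesis
  proof (cases "\<exists>a\<^sub>0\<in>A. (\<Sum>b\<in>B. y\<^sub>0 b * c a\<^sub>0 b) < max_payoff A B c y\<^sub>0")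
    case True
    then obtain a\<^sub>0 where a\<^sub>0: "a\<^sub>0 \<in> A" "(\<Sum>b\<in>B. y\<^sub>0 b * c a\<^sub>0 b) < max_payoff A B c y\<^sub>0" ..
    have "min_payoff B A ?c' y\<^sub>0 < (\<Sum>b\<in>B. y\<^sub>0 b * ?c' b a\<^sub>0)"
      using a\<^sub>0(2) by (simp add: min_payoff_transpose[OF fin(1,2)] sum_negf)
    moreover have "min_payoff B A ?c' y \<le> min_payoff B A ?c' y\<^sub>0" if "y \<in> prob_vectors B" for y
      using y\<^sub>0_opt[OF that] by (simp add: min_payoff_transpose[OF fin(1,2)])
    moreover have "max_payoff B A ?c' x\<^sub>0 \<le> max_payoff B A ?c' x" if "x \<in> prob_vectors A" for x
      using x\<^sub>0_opt[OF that] by (simp add: max_payoff_transpose[OF fin(3,4)])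
    ultimately have "max_payoff B A ?c' x\<^sub>0 \<le> min_payoff B A ?c' y\<^sub>0"
      using minimax_step[OF fin(3,4,1,2) IH_A y\<^sub>0] a\<^sub>0(1) by blast
    then show ?thesis
      by (simp add: min_payoff_transpose[OF fin(1,2)] max_payoff_transpose[OF fin(3,4)])
  next
    case False
    have "(\<Sum>a\<in>A. x\<^sub>0 a * c a b) = min_payoff A B c x\<^sub>0" if "b \<in> B" for b
      using no_b\<^sub>0 min_payoff_le[OF fin(3) that, of A c x\<^sub>0] that by force
    moreover have "(\<Sum>b\<in>B. y\<^sub>0 b * c a b) = max_payoff A B c y\<^sub>0" if "a \<in> A" for a
      using False le_max_payoff[OF fin(1) that, where B = B and y = y\<^sub>0 and c = c] that by force
    ultimately have "max_payoff A B c y\<^sub>0 = min_payoff A B c x\<^sub>0"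
      by (rule max_payoff_eq_min_payoff_if_equalizing[OF x\<^sub>0 y\<^sub>0])
    then show ?thesis by simp
  qed
qed

theorem finite_minimax:
  assumes "finite A" "A \<noteq> {}" "finite B" "B \<noteq> {}"
  shows "has_game_value A B c"
  using assms
proof (induction "card A + card B" arbitrary: A B c rule: less_induct)
  case (less A B c)
  note fin = less.prems
  obtain x\<^sub>0 y\<^sub>0 where x\<^sub>0: "x\<^sub>0 \<in> prob_vectors A" and y\<^sub>0: "y\<^sub>0 \<in> prob_vectors B"
    and x\<^sub>0_opt: "\<And>x. x \<in> prob_vectors A \<Longrightarrow> min_payoff A B c x \<le> min_payoff A B c x\<^sub>0"
    and y\<^sub>0_opt: "\<And>y. y \<in> prob_vectors B \<Longrightarrow> max_payoff A B c y\<^sub>0 \<le> max_payoff A B c y"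
    using ex_optimal_strategies[OF fin, where c = c] by blast
  have IH_B: "has_game_value A B' c" if "B' \<subset> B" "B' \<noteq> {}" for B'
  proof -
    have "card A + card B' < card A + card B" using psubset_card_mono[OF fin(3) that(1)] by simp
    from less.hyps[OF this fin(1,2) rev_finite_subset[OF fin(3) psubset_imp_subset[OF that(1)]] that(2)]
    show ?thesis .
  qed
  have IH_A: "has_game_value B A' (\<lambda>b a. - c a b)" if "A' \<subset> A" "A' \<noteq> {}" for A'
  proof -
    have "card A' + card B < card A + card B" using psubset_card_mono[OF fin(1) that(1)] by simp
    from less.hyps[OF this rev_finite_subset[OF fin(1) psubset_imp_subset[OF that(1)]] that(2) fin(3,4)]
    show ?thesis by (rule has_game_value_transpose)
  qed
  have "max_payoff A B c y\<^sub>0 \<le> min_payoff A B c x\<^sub>0"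
    by (rule max_payoff_le_min_payoff_if_optimal[OF fin IH_B IH_A x\<^sub>0 x\<^sub>0_opt y\<^sub>0 y\<^sub>0_opt])
  then have "\<forall>a\<in>A. (\<Sum>b\<in>B. y\<^sub>0 b * c a b) \<le> min_payoff A B c x\<^sub>0"
    using le_max_payoff[OF fin(1), where B = B and y = y\<^sub>0 and c = c] order_trans by blast
  moreover have "\<forall>b\<in>B. min_payoff A B c x\<^sub>0 \<le> (\<Sum>a\<in>A. x\<^sub>0 a * c a b)"
    using min_payoff_le[OF fin(3)] by blast
  ultimately show ?case using x\<^sub>0 y\<^sub>0 unfolding has_game_value_def by blast
qed

section \<open>Nets, addresses and realizations of discrete measures\<close>

definition mesh :: "nat \<Rightarrow> real" where "mesh n = (1/2)^n"

lemma mesh_pos: "0 < mesh n" by (simp add: mesh_def)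

definition net :: "'a::metric_space set \<Rightarrow> nat \<Rightarrow> 'a list" where
  "net S n = (SOME xs. set xs \<subseteq> S \<and> S \<subseteq> (\<Union>x\<in>set xs. ball x (mesh n)))"

lemma ex_net:
  assumes "compact S"
  shows "\<exists>xs. set xs \<subseteq> S \<and> S \<subseteq> (\<Union>x\<in>set xs. ball x (mesh n))"
proof -
  have "S \<subseteq> (\<Union>x\<in>S. ball x (mesh n))" using mesh_pos by auto
  then obtain D where D: "D \<subseteq> S" "finite D" "S \<subseteq> (\<Union>x\<in>D. ball x (mesh n))"
    using compactE_image[OF assms, of S "\<lambda>x. ball x (mesh n)"] by auto
  obtain xs where "set xs = D" using finite_list[OF D(2)] by auto
  then show ?thesis using D by auto
qed

lemma net_covers:
  assumes "compact S"
  shows "set (net S n) \<subseteq> S" "S \<subseteq> (\<Union>x\<in>set (net S n). ball x (mesh n))"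
  using someI_ex[OF ex_net[OF assms, of n]] unfolding net_def by auto

definition net_size :: "'a::metric_space set \<Rightarrow> nat \<Rightarrow> nat" where "net_size S n = length (net S n)"

definition cell :: "'a::metric_space set \<Rightarrow> nat \<Rightarrow> 'a \<Rightarrow> nat" where
  "cell S n x = (LEAST j. j < net_size S n \<and> dist x (net S n ! j) < mesh n)"

lemma cell_bounds:
  assumes "compact S" "x \<in> S"
  shows "cell S n x < net_size S n" "dist x (net S n ! cell S n x) < mesh n"
proof -
  obtain a where a: "a \<in> set (net S n)" "x \<in> ball a (mesh n)"
    using net_covers(2)[OF assms(1), of n] assms(2) by auto
  then obtain j where j: "j < net_size S n" "net S n ! j = a" by (auto simp: net_size_def in_set_conv_nth)
  then have ex: "\<exists>j. j < net_size S n \<and> dist x (net S n ! j) < mesh n"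
    using a(2) by (auto simp: dist_commute)
  from LeastI_ex[OF ex] show "cell S n x < net_size S n" "dist x (net S n ! cell S n x) < mesh n"
    unfolding cell_def by auto
qed

definition address :: "'a::metric_space set \<Rightarrow> 'a \<Rightarrow> nat \<Rightarrow> nat list" where
  "address S x n = map (\<lambda>i. cell S i x) [0..<n]"

lemma length_address[simp]: "length (address S x n) = n" by (simp add: address_def)
lemma address_Suc: "address S x (Suc n) = address S x n @ [cell S n x]" by (simp add: address_def)
lemma address_0[simp]: "address S x 0 = []"
  by (simp add: address_def)

lemma take_address: "m \<le> n \<Longrightarrow> take m (address S x n) = address S x m"
  by (simp add: address_def take_map)

lemma dist_lt_if_address_eq:
  assumes "compact S" "x \<in> S" "y \<in> S" "address S x (Suc n) = address S y (Suc n)"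
  shows "dist x y < 2 * mesh n"
proof -
  have e: "cell S n x = cell S n y" using assms(4) by (simp add: address_Suc)
  have "dist x y \<le> dist x (net S n ! cell S n x) + dist y (net S n ! cell S n x)"
    by (rule dist_triangle2)
  also have "\<dots> < mesh n + mesh n" using cell_bounds(2)[OF assms(1,2), of n] cell_bounds(2)[OF assms(1,3), of n] e
    by (intro add_strict_mono) auto
  finally show ?thesis by simp
qed

definition addresses :: "'a::metric_space set \<Rightarrow> nat \<Rightarrow> nat list set" where
  "addresses S k = (\<lambda>x. address S x k) ` S"

lemma finite_addresses:
  assumes "compact S"
  shows "finite (addresses S k)"
proof -
  let ?M = "\<Sum>i<k. net_size S i"
  have "addresses S k \<subseteq> {xs. set xs \<subseteq> {..<?M} \<and> length xs = k}"
  proof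
    fix p assume "p \<in> addresses S k"
    then obtain x where x: "x \<in> S" "p = address S x k" by (auto simp: addresses_def)
    have "cell S i x < ?M" if "i < k" for i
    proof -
      have "cell S i x < net_size S i" using cell_bounds[OF assms x(1)] by auto
      also have "net_size S i \<le> ?M" using that by (intro member_le_sum) auto
      finally show ?thesis .
    qed
    then show "p \<in> {xs. set xs \<subseteq> {..<?M} \<and> length xs = k}" using x(2) by (auto simp: address_def)
  qed
  moreover have "finite {xs. set xs \<subseteq> {..<?M} \<and> length xs = k}"
    by (rule finite_lists_length_eq) simp
  ultimately show ?thesis by (rule finite_subset)
qed

lemma length_addresses: "p \<in> addresses S k \<Longrightarrow> length p = k"
  by (auto simp: addresses_def)

lemma address_in_addresses: "x \<in> S \<Longrightarrow> address S x k \<in> addresses S k"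
  by (simp add: addresses_def)

lemma addresses_nonempty: "S \<noteq> {} \<Longrightarrow> addresses S k \<noteq> {}" by (simp add: addresses_def)

definition representative :: "'a::metric_space set \<Rightarrow> nat list \<Rightarrow> 'a" where
  "representative S p = (SOME x. x \<in> S \<and> address S x (length p) = p)"

lemma representative_address:
  assumes "p \<in> addresses S k"
  shows "representative S p \<in> S" "address S (representative S p) k = p"
proof -
  obtain x where x: "x \<in> S" "p = address S x k" using assms by (auto simp: addresses_def)
  then have "\<exists>x. x \<in> S \<and> address S x (length p) = p" by auto
  from someI_ex[OF this] show "representative S p \<in> S" "address S (representative S p) k = p"
    using x unfolding representative_def by auto
qed

lemma representative_Nil: "S \<noteq> {} \<Longrightarrow> representative S [] \<in> S"
  using representative_address(1)[of "[]" S 0] by (auto simp: addresses_def)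

text \<open>Going through the representatives makes \<open>mass S k w\<close> a consistent system of masses
  on the whole tree of addresses, also below depth \<open>k\<close>.\<close>
definition mass :: "'a::metric_space set \<Rightarrow> nat \<Rightarrow> (nat list \<Rightarrow> real) \<Rightarrow> nat list \<Rightarrow> real" where
  "mass S k w p = (\<Sum>q\<in>addresses S k. w q * of_bool (address S (representative S q) (length p) = p))"

text \<open>A probability measure on the infinite tree of finite sequences with branching
  \<open>N\<close>, given by the masses of the nodes.\<close>
definition tree_masses :: "(nat \<Rightarrow> nat) \<Rightarrow> (nat list \<Rightarrow> real) \<Rightarrow> bool" where
  "tree_masses N m \<longleftrightarrow> m [] = 1 \<and> (\<forall>p. 0 \<le> m p) \<and> (\<forall>p. m p = (\<Sum>j<N (length p). m (p @ [j])))
     \<and> (\<forall>p j. N (length p) \<le> j \<longrightarrow> m (p @ [j]) = 0)"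

lemma tree_masses_mass:
  assumes S: "compact S" and w: "w \<in> prob_vectors (addresses S k)"
  shows "tree_masses (net_size S) (mass S k w)"
  unfolding tree_masses_def
proof (intro conjI allI impI)
  show "mass S k w [] = 1" using w by (simp add: mass_def prob_vectors_def)
  show "0 \<le> mass S k w p" for p using w unfolding mass_def prob_vectors_def by (auto intro!: sum_nonneg)
  show "mass S k w p = (\<Sum>j<net_size S (length p). mass S k w (p @ [j]))" for p
  proof -
    let ?a = "\<lambda>q. address S (representative S q)"
    have children: "(\<Sum>j<net_size S (length p). of_bool (?a q (Suc (length p)) = p @ [j]) :: real)
        = of_bool (?a q (length p) = p)" if q: "q \<in> addresses S k" for q
    proof -
      have "cell S (length p) (representative S q) < net_size S (length p)"
        using cell_bounds(1)[OF S representative_address(1)[OF q]] .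
      moreover have "(\<Sum>j<net_size S (length p). of_bool (?a q (Suc (length p)) = p @ [j]) :: real)
          = (\<Sum>j<net_size S (length p).
              if cell S (length p) (representative S q) = j then of_bool (?a q (length p) = p) else 0)"
        by (intro sum.cong) (auto simp: address_Suc)
      ultimately show ?thesis by simp
    qed
    have "(\<Sum>j<net_size S (length p). mass S k w (p @ [j]))
        = (\<Sum>q\<in>addresses S k. w q * (\<Sum>j<net_size S (length p). of_bool (?a q (Suc (length p)) = p @ [j])))"
      unfolding mass_def by (subst sum.swap) (simp only: sum_distrib_left length_append_singleton)
    also have "\<dots> = mass S k w p"
      unfolding mass_def by (intro sum.cong refl) (simp only: children)
    finally show ?thesis ..
  qed
  show "mass S k w (p @ [j]) = 0" if "net_size S (length p) \<le> j" for p j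
  proof -
    have "address S (representative S q) (length (p @ [j])) \<noteq> p @ [j]" if q: "q \<in> addresses S k" for q
      using cell_bounds(1)[OF S representative_address(1)[OF q], of "length p"] \<open>net_size S (length p) \<le> j\<close> by (auto simp: address_Suc)
    then show ?thesis unfolding mass_def by (intro sum.neutral) auto
  qed
qed

lemma mass_full_depth:
  assumes "length p = k" "finite (addresses S k)"
  shows "mass S k w p = (if p \<in> addresses S k then w p else 0)"
proof -
  have "mass S k w p = (\<Sum>q\<in>addresses S k. if q = p then w q else 0)"
    unfolding mass_def using representative_address(2) assms(1) by (intro sum.cong) auto
  also have "\<dots> = (if p \<in> addresses S k then w p else 0)"
    using assms(2) by (simp add: sum.delta')
  finally show ?thesis .
qed

lemma mass_le_1:
  assumes "w \<in> prob_vectors (addresses S k)"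
  shows "mass S k w p \<le> 1"
proof -
  have "mass S k w p \<le> (\<Sum>q\<in>addresses S k. w q)"
    unfolding mass_def using assms by (intro sum_mono) (auto simp: prob_vectors_def)
  then show ?thesis using assms by (simp add: prob_vectors_def)
qed

text \<open>The slots of the children \<open>p @ [j]\<close> fill the slot of \<open>p\<close> from left to right, so
  the slots of each depth partition \<open>[0,1)\<close> into intervals of lengths \<open>m p\<close>.\<close>
definition offset :: "(nat list \<Rightarrow> real) \<Rightarrow> nat list \<Rightarrow> real" where
  "offset m p = (\<Sum>i<length p. \<Sum>j<p!i. m (take i p @ [j]))"

definition slot :: "(nat list \<Rightarrow> real) \<Rightarrow> nat list \<Rightarrow> real set" where
  "slot m p = {offset m p ..< offset m p + m p}"

lemma offset_Nil[simp]: "offset m [] = 0"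
  by (simp add: offset_def)

lemma offset_snoc: "offset m (p @ [j]) = offset m p + (\<Sum>j'<j. m (p @ [j']))"
proof -
  have t1: "take i (p @ [j]) = take i p" if "i < length p" for i
    using that by simp
  have t2: "(p @ [j]) ! i = p ! i" if "i < length p" for i
    using that by (simp add: nth_append_left)
  have "offset m (p @ [j]) = (\<Sum>i<Suc (length p). \<Sum>j'<(p @ [j])!i. m (take i (p @ [j]) @ [j']))"
    by (simp add: offset_def)
  also have "\<dots> = (\<Sum>i<length p. \<Sum>j'<(p @ [j])!i. m (take i (p @ [j]) @ [j']))
      + (\<Sum>j'<(p @ [j])!(length p). m (take (length p) (p @ [j]) @ [j']))"
    by (rule sum.lessThan_Suc)
  also have "(\<Sum>i<length p. \<Sum>j'<(p @ [j])!i. m (take i (p @ [j]) @ [j'])) = offset m p"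
    unfolding offset_def by (rule sum.cong[OF refl]) (simp only: t1 t2 lessThan_iff)
  also have "(\<Sum>j'<(p @ [j])!(length p). m (take (length p) (p @ [j]) @ [j'])) = (\<Sum>j'<j. m (p @ [j']))"
    by simp
  finally show ?thesis .
qed

lemma tree_massesD:
  assumes "tree_masses N m"
  shows "m [] = 1" "0 \<le> m p" "m p = (\<Sum>j<N (length p). m (p @ [j]))"
    "N (length p) \<le> j \<Longrightarrow> m (p @ [j]) = 0"
  using assms unfolding tree_masses_def by blast+

lemma slot_snoc_subset:
  assumes tree: "tree_masses N m"
  shows "slot m (p @ [j]) \<subseteq> slot m p"
proof (cases "j < N (length p)")
  case True
  have "(\<Sum>j'<j. m (p @ [j'])) + m (p @ [j]) = (\<Sum>j'<Suc j. m (p @ [j']))" by simp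
  also have "\<dots> \<le> (\<Sum>j'<N (length p). m (p @ [j']))"
    using True tree_massesD(2)[OF tree] by (intro sum_mono2) auto
  also have "\<dots> = m p" by (rule tree_massesD(3)[OF tree, symmetric])
  finally have h1: "(\<Sum>j'<j. m (p @ [j'])) + m (p @ [j]) \<le> m p" .
  have h2: "0 \<le> (\<Sum>j'<j. m (p @ [j']))" using tree_massesD(2)[OF tree] by (intro sum_nonneg) auto
  show ?thesis unfolding slot_def offset_snoc using h1 h2 by auto
next
  case False
  then have "m (p @ [j]) = 0" using tree_massesD(4)[OF tree] by simp
  then show ?thesis by (simp add: slot_def)
qed

lemma ex_partial_sum_bracket:
  fixes a :: "nat \<Rightarrow> real"
  assumes "\<And>j. 0 \<le> a j" "0 \<le> s" "s < (\<Sum>j<n. a j)"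
  shows "\<exists>j<n. (\<Sum>i<j. a i) \<le> s \<and> s < (\<Sum>i<j. a i) + a j"
  using assms(3)
proof (induction n)
  case 0 then show ?case using assms(2) by simp
next
  case (Suc n)
  show ?case
  proof (cases "s < (\<Sum>j<n. a j)")
    case True
    then show ?thesis using Suc.IH by (meson less_SucI)
  next
    case False
    then show ?thesis using Suc.prems by (intro exI[of _ n]) auto
  qed
qed

lemma ex_slot_snoc:
  assumes tree: "tree_masses N m" and t: "t \<in> slot m p"
  shows "\<exists>j<N (length p). t \<in> slot m (p @ [j])"
proof -
  have "\<exists>j<N (length p). (\<Sum>i<j. m (p @ [i])) \<le> t - offset m p \<and>
      t - offset m p < (\<Sum>i<j. m (p @ [i])) + m (p @ [j])"
  proof (rule ex_partial_sum_bracket)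
    show "t - offset m p < (\<Sum>j<N (length p). m (p @ [j]))"
      using t tree_massesD(3)[OF tree, of p] by (simp add: slot_def)
  qed (use t tree_massesD(2)[OF tree] in \<open>auto simp: slot_def\<close>)
  then show ?thesis unfolding slot_def offset_snoc by auto
qed

lemma slot_snoc_unique:
  assumes tree: "tree_masses N m" and t: "t \<in> slot m (p @ [j])" "t \<in> slot m (p @ [j'])"
  shows "j = j'"
proof -
  have *: False if "t \<in> slot m (p @ [a])" "t \<in> slot m (p @ [b])" "a < b" for a b
  proof -
    have "(\<Sum>i<Suc a. m (p @ [i])) \<le> (\<Sum>i<b. m (p @ [i]))"
      using that(3) tree_massesD(2)[OF tree] by (intro sum_mono2) auto
    then show False using that(1,2) unfolding slot_def offset_snoc by simp
  qed
  show ?thesis using *[OF t] *[OF t(2,1)] by (cases j j' rule: linorder_cases) auto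
qed

lemma slot_unique:
  assumes tree: "tree_masses N m"
  shows "length p = length q \<Longrightarrow> t \<in> slot m p \<Longrightarrow> t \<in> slot m q \<Longrightarrow> p = q"
proof (induction p arbitrary: q rule: rev_induct)
  case Nil then show ?case by simp
next
  case (snoc a p)
  obtain q' b where q: "q = q' @ [b]" using snoc.prems(1) by (cases q rule: rev_exhaust) auto
  have "t \<in> slot m p" using snoc.prems(2) slot_snoc_subset[OF tree] by auto
  moreover have "t \<in> slot m q'" using snoc.prems(3) slot_snoc_subset[OF tree] q by auto
  ultimately have "p = q'" using snoc.IH snoc.prems(1) q by auto
  then show ?case using slot_snoc_unique[OF tree snoc.prems(2)] snoc.prems(3) q by auto
qed

lemma slot_take:
  assumes tree: "tree_masses N m"
  shows "t \<in> slot m p \<Longrightarrow> n \<le> length p \<Longrightarrow> t \<in> slot m (take n p)"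
proof (induction p arbitrary: n rule: rev_induct)
  case Nil then show ?case by simp
next
  case (snoc a p)
  show ?case
  proof (cases "n = length (p @ [a])")
    case True then show ?thesis using snoc.prems by simp
  next
    case False
    then have "n \<le> length p" using snoc.prems(2) by simp
    moreover have "t \<in> slot m p" using snoc.prems(1) slot_snoc_subset[OF tree] by auto
    ultimately show ?thesis using snoc.IH by simp
  qed
qed

lemma slot_Nil: "tree_masses N m \<Longrightarrow> slot m [] = {0..<1}"
  by (simp add: slot_def tree_massesD(1))

lemma slot_subset_unit:
  assumes tree: "tree_masses N m" shows "slot m p \<subseteq> {0..<1}"
proof
  fix t assume "t \<in> slot m p"
  then have "t \<in> slot m (take 0 p)" by (rule slot_take[OF tree]) simp
  then show "t \<in> {0..<1}" by (simp add: slot_Nil[OF tree])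
qed

lemma ex_slot:
  assumes tree: "tree_masses N m" and t: "0 \<le> t" "t < 1"
  shows "\<exists>p. length p = n \<and> t \<in> slot m p"
proof (induction n)
  case 0 then show ?case using slot_Nil[OF tree] t by auto
next
  case (Suc n)
  then obtain p where p: "length p = n" "t \<in> slot m p" by auto
  obtain j where "t \<in> slot m (p @ [j])" using ex_slot_snoc[OF tree p(2)] by blast
  then show ?case using \<open>length p = n\<close> by (intro exI[of _ "p @ [j]"]) auto
qed

lemma mass_pos_if_in_slot:
  assumes "t \<in> slot m p" shows "0 < m p"
proof -
  have "offset m p \<le> t" "t < offset m p + m p" using assms unfolding slot_def by auto
  then show ?thesis by linarith
qed


definition unif :: "real measure" where "unif = uniform_measure lborel {0..<1}"

lemma prob_space_unif: "prob_space unif"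
  unfolding unif_def by (rule prob_space_uniform_measure) (auto simp: emeasure_lborel_Ico)

lemma sets_unif[simp, measurable_cong]: "sets unif = sets borel"
  by (simp add: unif_def)

lemma space_unif[simp]: "space unif = UNIV"
  by (simp add: unif_def)

lemma measure_unif_slot:
  assumes tree: "tree_masses N m"
  shows "measure unif (slot m p) = m p"
proof -
  have sub: "slot m p \<subseteq> {0..<1}" by (rule slot_subset_unit[OF tree])
  have "emeasure unif (slot m p) = emeasure lborel ({0..<1} \<inter> slot m p) / emeasure lborel {0..<1::real}"
    unfolding unif_def by (rule emeasure_uniform_measure) (auto simp: slot_def)
  also have "\<dots> = emeasure lborel (slot m p)" using sub by (simp add: Int_absorb1 emeasure_lborel_Ico divide_ennreal_def)
  also have "\<dots> = ennreal (m p)" unfolding slot_def using tree_massesD(2)[OF tree, of p]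
    by (simp add: emeasure_lborel_Ico)
  finally show ?thesis using tree_massesD(2)[OF tree, of p] by (simp add: measure_def)
qed

text \<open>\<open>realize S k m\<close> sends the slot of each address of depth \<open>k\<close> to its representative,
  so its law under \<open>unif\<close> has the weights \<open>m\<close> (\<open>integral_realize\<close>). As the slots are
  nested, realizations at different depths are pointwise close.\<close>
definition realize :: "'a::metric_space set \<Rightarrow> nat \<Rightarrow> (nat list \<Rightarrow> real) \<Rightarrow> real \<Rightarrow> 'a" where
  "realize S k m t = (if t \<in> {0..<1} then representative S (THE p. length p = k \<and> t \<in> slot m p) else representative S [])"

lemma realize_eq:
  assumes tree: "tree_masses N m" and p: "length p = k" "t \<in> slot m p"
  shows "realize S k m t = representative S p"
proof -
  have t: "t \<in> {0..<1}" using slot_subset_unit[OF tree, of p] p(2) by blast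
  have "(THE p. length p = k \<and> t \<in> slot m p) = p"
    by (rule the_equality) (use p slot_unique[OF tree] in auto)
  then show ?thesis using t by (simp add: realize_def)
qed

lemma realize_outside_unit: "t \<notin> {0..<1} \<Longrightarrow> realize S k m t = representative S []"
  by (auto simp: realize_def)

lemma realize_in_slot:
  assumes S: "compact S" and w: "w \<in> prob_vectors (addresses S k)" and t: "t \<in> {0..<1}"
  shows "\<exists>p\<in>addresses S k. t \<in> slot (mass S k w) p \<and> realize S k (mass S k w) t = representative S p"
proof -
  have tree: "tree_masses (net_size S) (mass S k w)" by (rule tree_masses_mass[OF S w])
  obtain p where p: "length p = k" "t \<in> slot (mass S k w) p" using ex_slot[OF tree] t by auto
  have "0 < mass S k w p" by (rule mass_pos_if_in_slot[OF p(2)])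
  then have "p \<in> addresses S k" using mass_full_depth[OF p(1) finite_addresses[OF S]] by (auto split: if_splits)
  then show ?thesis using p realize_eq[OF tree p] by auto
qed

lemma realize_in:
  assumes S: "compact S" "S \<noteq> {}" and w: "w \<in> prob_vectors (addresses S k)"
  shows "realize S k (mass S k w) t \<in> S"
proof (cases "t \<in> {0..<1}")
  case True
  then show ?thesis using realize_in_slot[OF S(1) w True] representative_address(1) by auto
next
  case False
  then show ?thesis using representative_Nil[OF S(2)] by (simp add: realize_outside_unit)
qed

lemma realize_measurable:
  assumes S: "compact S" and w: "w \<in> prob_vectors (addresses S k)"
  shows "realize S k (mass S k w) \<in> borel_measurable borel"
proof (rule measurable_piecewise_restrict)
  let ?m = "mass S k w"
  let ?C = "insert (- {0..<1}) (slot ?m ` addresses S k)"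
  have m: "tree_masses (net_size S) ?m" by (rule tree_masses_mass[OF S w])
  show "countable ?C" using finite_addresses[OF S] by (simp add: countable_finite)
  show "\<Omega> \<inter> space borel \<in> sets borel" if "\<Omega> \<in> ?C" for \<Omega>
    using that by (auto simp: slot_def)
  show "space borel \<subseteq> \<Union> ?C"
  proof
    fix t :: real
    show "t \<in> \<Union> ?C"
    proof (cases "t \<in> {0..<1}")
      case True
      then obtain p where "p \<in> addresses S k" "t \<in> slot ?m p" using realize_in_slot[OF S w] by blast
      then show ?thesis by blast
    qed blast
  qed
  show "realize S k ?m \<in> restrict_space borel \<Omega> \<rightarrow>\<^sub>M borel" if \<Omega>: "\<Omega> \<in> ?C" for \<Omega>
  proof -
    have "\<exists>x. \<forall>t\<in>\<Omega>. realize S k ?m t = x"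
    proof (cases "\<Omega> = - {0..<1}")
      case True
      then show ?thesis using realize_outside_unit by blast
    next
      case False
      then obtain p where "p \<in> addresses S k" "\<Omega> = slot ?m p" using \<Omega> by blast
      then show ?thesis using realize_eq[OF m length_addresses] by blast
    qed
    then obtain x where "\<And>t. t \<in> \<Omega> \<Longrightarrow> realize S k ?m t = x" by blast
    then show ?thesis
      by (subst measurable_cong[where g = "\<lambda>_. x"]) (auto simp: space_restrict_space)
  qed
qed

lemma realize_eq_sum_indicator:
  fixes F :: "'a::metric_space \<Rightarrow> real"
  assumes S: "compact S" and w: "w \<in> prob_vectors (addresses S k)" and t: "t \<in> {0..<1}"
  shows "F (realize S k (mass S k w) t)
    = (\<Sum>p\<in>addresses S k. F (representative S p) * indicator (slot (mass S k w) p) t)"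
proof -
  have m: "tree_masses (net_size S) (mass S k w)" by (rule tree_masses_mass[OF S w])
  obtain p where p: "p \<in> addresses S k" "t \<in> slot (mass S k w) p"
    and realize_p: "realize S k (mass S k w) t = representative S p"
    using realize_in_slot[OF S w t] by blast
  have "t \<notin> slot (mass S k w) q" if "q \<in> addresses S k" "q \<noteq> p" for q
    using slot_unique[OF m _ _ p(2), of q] length_addresses[OF p(1)] length_addresses[OF that(1)] that(2)
    by auto
  then have "(\<Sum>q\<in>addresses S k. F (representative S q) * indicator (slot (mass S k w) q) t)
      = (\<Sum>q\<in>addresses S k. if q = p then F (representative S p) else 0)"
    using p(2) by (intro sum.cong) (auto simp: indicator_def)
  also have "\<dots> = F (representative S p)" using p(1) finite_addresses[OF S] by simp
  finally show ?thesis using realize_p by simp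
qed

lemma integral_realize:
  fixes F :: "'a::metric_space \<Rightarrow> real"
  assumes S: "compact S" and w: "w \<in> prob_vectors (addresses S k)" and F: "F \<in> borel_measurable borel"
  shows "(\<integral>t. F (realize S k (mass S k w) t) \<partial>unif) = (\<Sum>p\<in>addresses S k. w p * F (representative S p))"
proof -
  let ?m = "mass S k w"
  have m: "tree_masses (net_size S) ?m" by (rule tree_masses_mass[OF S w])
  have slot: "slot ?m p \<in> sets unif" "emeasure unif (slot ?m p) < \<infinity>" for p
    using prob_space.emeasure_le_1[OF prob_space_unif, of "slot ?m p"]
    by (auto simp: slot_def le_less_trans)
  have "AE t in unif. F (realize S k ?m t) = (\<Sum>p\<in>addresses S k. F (representative S p) * indicator (slot ?m p) t)"
    unfolding unif_def
    by (rule AE_uniform_measureI) (auto intro!: AE_I2 simp: realize_eq_sum_indicator[OF S w, where F = F])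
  then have "(\<integral>t. F (realize S k ?m t) \<partial>unif)
      = (\<integral>t. (\<Sum>p\<in>addresses S k. F (representative S p) * indicator (slot ?m p) t) \<partial>unif)"
    using measurable_comp[OF realize_measurable[OF S w] F] slot(1)
    by (intro integral_cong_AE) (auto simp: comp_def)
  also have "\<dots> = (\<Sum>p\<in>addresses S k. F (representative S p) * ?m p)"
    using slot by (simp add: measure_unif_slot[OF m])
  also have "\<dots> = (\<Sum>p\<in>addresses S k. w p * F (representative S p))"
    using mass_full_depth[OF length_addresses finite_addresses[OF S], of _ S k w]
    by (intro sum.cong) auto
  finally show ?thesis .
qed

section \<open>Almost everywhere convergent realizations\<close>

lemma ex_mesh_less:
  assumes "0 < e"
  shows "\<exists>n. 2 * mesh n < e"
proof -
  obtain n where "(1 / 2 :: real) ^ n < e / 2" using real_arch_pow_inv[of "e / 2" "1 / 2"] assms by auto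
  then have "2 * mesh n < e" by (simp add: mesh_def)
  then show ?thesis ..
qed

lemma address_eq_if_address_eq_deeper:
  "address S x k = address S y k \<Longrightarrow> n \<le> k \<Longrightarrow> address S x n = address S y n"
  by (metis take_address)

lemma address_realize:
  assumes S: "compact S" and w: "w \<in> prob_vectors (addresses S k)"
    and t: "t \<in> slot (mass S k w) p" and "length p \<le> k"
  shows "address S (realize S k (mass S k w) t) (length p) = p"
proof -
  have m: "tree_masses (net_size S) (mass S k w)" by (rule tree_masses_mass[OF S w])
  have "t \<in> {0..<1}" using slot_subset_unit[OF m] t by blast
  then obtain q where q: "q \<in> addresses S k" "t \<in> slot (mass S k w) q"
    and realize_q: "realize S k (mass S k w) t = representative S q"
    using realize_in_slot[OF S w] by blast
  have "take (length p) q = p"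
    using slot_unique[OF m _ slot_take[OF m q(2)] t] length_addresses[OF q(1)] \<open>length p \<le> k\<close>
    by simp
  then show ?thesis
    using realize_q representative_address(2)[OF q(1)] take_address[OF \<open>length p \<le> k\<close>]
    by metis
qed

lemma representative_address_tendsto:
  assumes S: "compact S" and y: "y \<in> S" and \<tau>: "\<And>k. k \<le> \<tau> k"
  shows "(\<lambda>k. representative S (address S y (\<tau> k))) \<longlonglongrightarrow> y"
proof (rule metric_LIMSEQ_I)
  fix e :: real assume "0 < e"
  then obtain n where n: "2 * mesh n < e" using ex_mesh_less by blast
  have "dist (representative S (address S y (\<tau> k))) y < e" if k: "Suc n \<le> k" for k
  proof -
    note P = address_in_addresses[OF y, of "\<tau> k"]
    have "address S (representative S (address S y (\<tau> k))) (Suc n) = address S y (Suc n)"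
      by (rule address_eq_if_address_eq_deeper[OF representative_address(2)[OF P]])
        (use \<tau>[of k] k in simp)
    with representative_address(1)[OF P] have "dist (representative S (address S y (\<tau> k))) y < 2 * mesh n"
      by (rule dist_lt_if_address_eq[OF S _ y])
    with n show ?thesis by linarith
  qed
  then show "\<exists>N. \<forall>k\<ge>N. dist (representative S (address S y (\<tau> k))) y < e"
    by (intro exI[of _ "Suc n"] allI impI)
qed

lemma ex_pointwise_convergent_subseq:
  fixes m :: "nat \<Rightarrow> 'i::countable \<Rightarrow> real"
  assumes "\<And>k i. m k i \<in> {0..1}"
  obtains \<sigma> m' where "strict_mono \<sigma>" "\<And>i. (\<lambda>k. m (\<sigma> k) i) \<longlonglongrightarrow> m' i"
proof -
  have "\<forall>k. m k \<in> Pi\<^sub>E UNIV (\<lambda>i. if i \<in> UNIV then {0..1::real} else {0})"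
    using assms by auto
  then obtain m' \<sigma> where \<sigma>: "strict_mono \<sigma>" "(m \<circ> \<sigma>) \<longlonglongrightarrow> m'"
    using seq_compactE[OF compact_imp_seq_compact[OF compact_PiE_Icc01]] by metis
  have "(\<lambda>k. m (\<sigma> k) i) \<longlonglongrightarrow> m' i" for i
    using continuous_on_tendsto_compose[OF continuous_on_product_coordinates \<sigma>(2)]
    by (simp add: o_def)
  with \<sigma>(1) show ?thesis by (rule that)
qed

lemma tree_masses_limit:
  assumes m: "\<And>k. tree_masses N (m k)" and lim: "\<And>p. (\<lambda>k. m k p) \<longlonglongrightarrow> m' p"
  shows "tree_masses N m'"
  unfolding tree_masses_def
proof (intro conjI allI impI)
  show "m' [] = 1"
    using lim[of "[]"] tree_massesD(1)[OF m] by (simp add: LIMSEQ_const_iff)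
  show "0 \<le> m' p" for p
    by (rule LIMSEQ_le_const[OF lim]) (use tree_massesD(2)[OF m] in auto)
  show "m' p = (\<Sum>j<N (length p). m' (p @ [j]))" for p
  proof -
    have "(\<lambda>k. \<Sum>j<N (length p). m k (p @ [j])) \<longlonglongrightarrow> (\<Sum>j<N (length p). m' (p @ [j]))"
      by (intro tendsto_sum lim)
    then show ?thesis using tree_massesD(3)[OF m, where p = p, symmetric] LIMSEQ_unique[OF lim[of p]]
      by simp
  qed
  show "m' (p @ [j]) = 0" if "N (length p) \<le> j" for p j
    using lim[of "p @ [j]"] tree_massesD(4)[OF m that] by (simp add: LIMSEQ_const_iff)
qed

lemma eventually_in_slot:
  assumes lim: "\<And>q. (\<lambda>k. m k q) \<longlonglongrightarrow> m' q"
    and t: "offset m' p < t" "t < offset m' p + m' p"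
  shows "eventually (\<lambda>k. t \<in> slot (m k) p) sequentially"
proof -
  have offset: "(\<lambda>k. offset (m k) p) \<longlonglongrightarrow> offset m' p"
    unfolding offset_def by (intro tendsto_sum lim)
  show ?thesis
    using order_tendstoD(2)[OF offset t(1)] order_tendstoD(1)[OF tendsto_add[OF offset lim] t(2)]
    by eventually_elim (auto simp: slot_def)
qed

text \<open>Off the countably many left endpoints of the limiting slots, \<open>t\<close> lies eventually
  in the same slot of depth \<open>n\<close> for every \<open>n\<close>, so the addresses of the realized points
  stabilise.\<close>
lemma Cauchy_realize:
  assumes S: "compact S" and w: "\<And>k. w k \<in> prob_vectors (addresses S (lev k))"
    and lev: "\<And>k. k \<le> lev k"
    and lim: "\<And>q. (\<lambda>k. mass S (lev k) (w k) q) \<longlonglongrightarrow> m' q" and m': "tree_masses (net_size S) m'"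
    and t: "t \<in> {0..<1}" "t \<notin> range (offset m')"
  shows "Cauchy (\<lambda>k. realize S (lev k) (mass S (lev k) (w k)) t)"
proof (rule metric_CauchyI)
  define x where "x k = realize S (lev k) (mass S (lev k) (w k)) t" for k
  have "S \<noteq> {}" using w[of 0] by (auto simp: prob_vectors_def addresses_def)
  fix e :: real assume "0 < e"
  then obtain n where n: "2 * mesh n < e" using ex_mesh_less by blast
  obtain p where p: "length p = Suc n" "t \<in> slot m' p" using ex_slot[OF m'] t(1) by auto
  then have "offset m' p < t" "t < offset m' p + m' p" using t(2) by (force simp: slot_def)+
  from eventually_in_slot[OF lim this] obtain K where K: "\<And>k. K \<le> k \<Longrightarrow> t \<in> slot (mass S (lev k) (w k)) p"
    unfolding eventually_sequentially by blast
  have "address S (x k) (Suc n) = p" if "max K (Suc n) \<le> k" for k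
    using address_realize[OF S w K] lev[of k] that p(1) by (simp add: x_def)
  moreover have "x k \<in> S" for k unfolding x_def by (rule realize_in[OF S \<open>S \<noteq> {}\<close> w])
  ultimately have "dist (x k) (x k') < 2 * mesh n" if "max K (Suc n) \<le> k" "max K (Suc n) \<le> k'" for k k'
    using dist_lt_if_address_eq[OF S] that by metis
  with n show "\<exists>M. \<forall>k\<ge>M. \<forall>k'\<ge>M. dist (x k) (x k') < e" by (meson order_less_trans)
qed

lemma AE_unif_in_unit_diff_countable:
  assumes "countable E"
  shows "AE t in unif. t \<in> {0..<1} - E"
  unfolding unif_def
proof (rule AE_uniform_measureI)
  show "AE t in lborel. t \<in> {0..<1} \<longrightarrow> t \<in> {0..<1} - E"
    using AE_not_in[OF countable_imp_null_set_lborel[OF assms]] by eventually_elim auto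
qed simp

lemma realize_AE_convergent_subseq:
  fixes S :: "'a::metric_space set"
  assumes S: "compact S" "S \<noteq> {}" and w: "\<And>k. w k \<in> prob_vectors (addresses S (lev k))"
    and lev: "\<And>k. k \<le> lev k"
  obtains \<sigma> g where "strict_mono \<sigma>" "g \<in> borel_measurable borel" "\<And>t. g t \<in> S"
    "AE t in unif. (\<lambda>k. realize S (lev (\<sigma> k)) (mass S (lev (\<sigma> k)) (w (\<sigma> k))) t) \<longlonglongrightarrow> g t"
proof -
  define m where "m k = mass S (lev k) (w k)" for k
  have m: "tree_masses (net_size S) (m k)" for k unfolding m_def by (rule tree_masses_mass[OF S(1) w])
  have m01: "m k p \<in> {0..1}" for k p
    using tree_massesD(2)[OF m] mass_le_1[OF w] by (simp add: m_def)
  obtain \<sigma> m' where \<sigma>: "strict_mono \<sigma>" and lim: "\<And>p. (\<lambda>k. m (\<sigma> k) p) \<longlonglongrightarrow> m' p"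
    using ex_pointwise_convergent_subseq[of m, OF m01] by blast
  have m': "tree_masses (net_size S) m'" by (rule tree_masses_limit[OF m lim])
  define G where "G = {0..<1::real} - range (offset m')"
  define x where "x k = realize S (lev (\<sigma> k)) (m (\<sigma> k))" for k
  have x_in: "x k t \<in> S" for k t unfolding x_def m_def by (rule realize_in[OF S w])
  have lev_\<sigma>: "k \<le> lev (\<sigma> k)" for k using le_trans[OF seq_suble[OF \<sigma>] lev] .
  have x_lim: "(\<lambda>k. x k t) \<longlonglongrightarrow> lim (\<lambda>k. x k t) \<and> lim (\<lambda>k. x k t) \<in> S" if "t \<in> G" for t
  proof -
    have "Cauchy (\<lambda>k. x k t)"
      using Cauchy_realize[OF S(1) w lev_\<sigma> lim[unfolded m_def] m'] that
      unfolding x_def m_def G_def by blast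
    moreover have "(\<forall>n. x n t \<in> S) \<and> Cauchy (\<lambda>k. x k t) \<longrightarrow> (\<exists>l\<in>S. (\<lambda>k. x k t) \<longlonglongrightarrow> l)"
      using compact_imp_complete[OF S(1)] unfolding complete_def by (rule spec)
    ultimately obtain l where "l \<in> S" "(\<lambda>k. x k t) \<longlonglongrightarrow> l"
      using x_in by blast
    then show ?thesis using limI by auto
  qed
  define g where "g t = (if t \<in> G then lim (\<lambda>k. x k t) else representative S [])" for t
  have "range (offset m') \<in> sets borel" by (rule sets.countable) auto
  then have G: "G \<in> sets borel" unfolding G_def by simp
  have g_meas: "g \<in> borel_measurable borel"
  proof (rule borel_measurable_LIMSEQ_metric)
    show "(\<lambda>t. if t \<in> G then x k t else representative S []) \<in> borel_measurable borel" for k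
      using G unfolding x_def m_def by (intro measurable_If_set realize_measurable[OF S(1) w]) auto
    show "(\<lambda>k. if t \<in> G then x k t else representative S []) \<longlonglongrightarrow> g t" for t
      using x_lim by (simp add: g_def)
  qed
  have g_in: "g t \<in> S" for t using x_lim representative_Nil[OF S(2)] by (simp add: g_def)
  have "AE t in unif. t \<in> G"
    unfolding G_def by (rule AE_unif_in_unit_diff_countable) simp
  then have "AE t in unif. (\<lambda>k. x k t) \<longlonglongrightarrow> g t"
    by eventually_elim (use x_lim in \<open>simp add: g_def\<close>)
  then show ?thesis by (intro that[OF \<sigma> g_meas g_in]) (simp add: x_def m_def)
qed

section \<open>A minimax theorem for continuous payoffs\<close>

lemma PM_D:
  assumes "\<mu> \<in> PM"
  shows "prob_space \<mu>" "sets \<mu> = sets borel" "space \<mu> = UNIV"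
  using assms by (auto simp: PM_def dest: sets_eq_imp_space_eq)

lemma PX_imp_PM: "\<mu> \<in> PX S \<Longrightarrow> \<mu> \<in> PM"
  by (simp add: PX_def)

lemmas PX_D = PM_D[OF PX_imp_PM]

lemma AE_in_PX:
  assumes "\<mu> \<in> PX S" "closed S"
  shows "AE x in \<mu>. x \<in> S"
proof -
  have "S \<in> sets \<mu>" "measure \<mu> S = 1"
    using assms PX_D(2)[OF assms(1)] by (auto simp: PX_def measure_def)
  then show ?thesis using prob_space.AE_in_set_eq_1[OF PX_D(1)[OF assms(1)]] by simp
qed

lemma distr_in_PX:
  assumes M: "prob_space M" and g: "g \<in> M \<rightarrow>\<^sub>M borel" and g_in: "\<And>t. g t \<in> S" and "closed S"
  shows "distr M borel g \<in> PX S"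
proof -
  have "emeasure (distr M borel g) S = emeasure M (g -` S \<inter> space M)"
    by (rule emeasure_distr[OF g]) (use \<open>closed S\<close> in simp)
  also have "g -` S \<inter> space M = space M" using g_in by auto
  finally show ?thesis
    using prob_space.prob_space_distr[OF M g] prob_space.emeasure_space_1[OF M]
    by (simp add: PX_def PM_def)
qed

lemma integrable_PX:
  fixes f :: "'a::metric_space \<Rightarrow> real"
  assumes \<mu>: "\<mu> \<in> PX S" and S: "compact S" and f: "continuous_on UNIV f"
  shows "integrable \<mu> f"
proof -
  obtain B where B: "\<And>x. x \<in> S \<Longrightarrow> norm (f x) \<le> B"
    using compact_imp_bounded[OF compact_continuous_image[OF continuous_on_subset[OF f] S]]
    by (auto simp: bounded_iff)
  have "AE x in \<mu>. norm (f x) \<le> B"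
    using AE_in_PX[OF \<mu> compact_imp_closed[OF S]] by eventually_elim (rule B)
  moreover have "f \<in> borel_measurable \<mu>"
    using borel_measurable_continuous_onI[OF f] measurable_cong_sets[OF PX_D(2)[OF \<mu>] refl] by blast
  ultimately show ?thesis
    by (intro finite_measure.integrable_const_bound[OF prob_space.finite_measure[OF PX_D(1)[OF \<mu>]]])
qed

lemma integral_le_PX:
  fixes f :: "'a::metric_space \<Rightarrow> real"
  assumes \<mu>: "\<mu> \<in> PX S" "closed S" and f: "integrable \<mu> f" and B: "\<And>x. x \<in> S \<Longrightarrow> f x \<le> B"
  shows "(\<integral>x. f x \<partial>\<mu>) \<le> B"
proof -
  interpret prob_space \<mu> by (rule PX_D(1)[OF \<mu>(1)])
  have "(\<integral>x. f x \<partial>\<mu>) \<le> (\<integral>x. B \<partial>\<mu>)"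
    using AE_in_PX[OF \<mu>] by (intro integral_mono_AE f) (auto intro: B elim: eventually_mono)
  then show ?thesis by (simp add: prob_space)
qed

lemma continuous_on_kernel:
  assumes "continuous_on UNIV (case_prod c)"
  shows "continuous_on UNIV (\<lambda>x. c x y)" "continuous_on UNIV (\<lambda>y. c x y)"
proof -
  have "continuous_on UNIV (\<lambda>x. (x, y))" "continuous_on UNIV (\<lambda>y. (x, y))"
    by (intro continuous_intros)+
  from continuous_on_compose[OF this(1) continuous_on_subset[OF assms]]
    continuous_on_compose[OF this(2) continuous_on_subset[OF assms]]
  show "continuous_on UNIV (\<lambda>x. c x y)" "continuous_on UNIV (\<lambda>y. c x y)"
    by (simp_all add: o_def)
qed

lemma tendsto_kernel:
  assumes "continuous_on UNIV (case_prod c)" "a \<longlonglongrightarrow> a\<^sub>0" "b \<longlonglongrightarrow> b\<^sub>0"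
  shows "(\<lambda>k. c (a k) (b k)) \<longlonglongrightarrow> c a\<^sub>0 b\<^sub>0"
  using continuous_on_tendsto_compose[OF assms(1) tendsto_Pair[OF assms(2,3)]] by simp

lemma bounded_kernel:
  fixes c :: "'a::metric_space \<Rightarrow> 'b::metric_space \<Rightarrow> real"
  assumes "continuous_on UNIV (case_prod c)" "compact X" "compact Y"
  obtains B where "\<And>x y. x \<in> X \<Longrightarrow> y \<in> Y \<Longrightarrow> \<bar>c x y\<bar> \<le> B"
proof -
  have "compact (case_prod c ` (X \<times> Y))"
    by (rule compact_continuous_image[OF continuous_on_subset[OF assms(1)] compact_Times[OF assms(2,3)]])
      simp
  then have "bounded (case_prod c ` (X \<times> Y))" by (rule compact_imp_bounded)
  then obtain B where B: "\<forall>v\<in>case_prod c ` (X \<times> Y). norm v \<le> B"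
    unfolding bounded_iff by blast
  have "\<bar>c x y\<bar> \<le> B" if "x \<in> X" "y \<in> Y" for x y
    using B that by force
  then show ?thesis by (rule that)
qed

text \<open>Dominated convergence along the realizations, whose laws are the discrete measures
  with weights \<open>w k\<close> (\<open>integral_realize\<close>).\<close>
lemma tendsto_sum_realize:
  fixes c :: "'a::metric_space \<Rightarrow> 'b::metric_space \<Rightarrow> real"
  assumes S: "compact S" "S \<noteq> {}" and w: "\<And>k. w k \<in> prob_vectors (addresses S (\<tau> k))"
    and lim: "AE t in unif. (\<lambda>k. realize S (\<tau> k) (mass S (\<tau> k) (w k)) t) \<longlonglongrightarrow> g t"
    and g: "g \<in> borel_measurable borel" and c: "continuous_on UNIV (case_prod c)"
    and T: "compact T" "y \<in> T" and \<tau>: "\<And>k. k \<le> \<tau> k"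
  shows "(\<lambda>k. \<Sum>p\<in>addresses S (\<tau> k). w k p * c (representative S p) (representative T (address T y (\<tau> k))))
    \<longlonglongrightarrow> (\<integral>x. c x y \<partial>distr unif borel g)"
proof -
  define h where "h k = realize S (\<tau> k) (mass S (\<tau> k) (w k))" for k
  define z where "z k = representative T (address T y (\<tau> k))" for k
  have z: "z \<longlonglongrightarrow> y" "z k \<in> T" for k
    unfolding z_def using representative_address_tendsto[OF T \<tau>]
      representative_address(1)[OF address_in_addresses[OF T(2)]] by auto
  obtain B where B: "\<And>x y. x \<in> S \<Longrightarrow> y \<in> T \<Longrightarrow> \<bar>c x y\<bar> \<le> B"
    using bounded_kernel[OF c S(1) T(1)] by blast
  have h: "h k \<in> borel_measurable unif" "h k t \<in> S" for k t
    unfolding h_def measurable_cong_sets[OF sets_unif refl]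
    by (intro realize_measurable realize_in S w)+
  have "(\<Sum>p\<in>addresses S (\<tau> k). w k p * c (representative S p) (z k)) = (\<integral>t. c (h k t) (z k) \<partial>unif)" for k
    unfolding h_def
    by (rule integral_realize[symmetric, OF S(1) w]) (rule borel_measurable_continuous_onI[OF continuous_on_kernel(1)[OF c]])
  moreover have "(\<lambda>k. \<integral>t. c (h k t) (z k) \<partial>unif) \<longlonglongrightarrow> (\<integral>t. c (g t) y \<partial>unif)"
  proof (rule integral_dominated_convergence[where w = "\<lambda>_. B"])
    show "(\<lambda>t. c (g t) y) \<in> borel_measurable unif"
      using g by (simp add: measurable_cong_sets[OF sets_unif refl]
          measurable_compose[OF _ borel_measurable_continuous_onI[OF continuous_on_kernel(1)[OF c]]])
    show "(\<lambda>t. c (h k t) (z k)) \<in> borel_measurable unif" for k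
      by (rule measurable_compose[OF h(1) borel_measurable_continuous_onI[OF continuous_on_kernel(1)[OF c]]])
    show "integrable unif (\<lambda>_. B)"
      by (rule finite_measure.integrable_const[OF prob_space.finite_measure[OF prob_space_unif]])
    show "AE t in unif. (\<lambda>k. c (h k t) (z k)) \<longlonglongrightarrow> c (g t) y"
      using lim by eventually_elim (rule tendsto_kernel[OF c _ z(1)], simp add: h_def)
    show "AE t in unif. norm (c (h k t) (z k)) \<le> B" for k
      using B[OF h(2) z(2)] by simp
  qed
  ultimately show ?thesis unfolding z_def using integral_distr[OF g[unfolded measurable_cong_sets[OF sets_unif[symmetric] refl]]
      borel_measurable_continuous_onI[OF continuous_on_kernel(1)[OF c]]] by simp
qed

lemma ex_discrete_saddles:
  fixes c :: "'a::metric_space \<Rightarrow> 'b::metric_space \<Rightarrow> real"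
  assumes X: "compact X" "X \<noteq> {}" and Y: "compact Y" "Y \<noteq> {}"
    and B: "\<And>x y. x \<in> X \<Longrightarrow> y \<in> Y \<Longrightarrow> \<bar>c x y\<bar> \<le> B"
  obtains w v l where "\<forall>k. w k \<in> prob_vectors (addresses X k)" "\<forall>k. v k \<in> prob_vectors (addresses Y k)"
    "\<forall>k. \<forall>q\<in>addresses Y k.
      l k \<le> (\<Sum>p\<in>addresses X k. w k p * c (representative X p) (representative Y q))"
    "\<forall>k. \<forall>p\<in>addresses X k.
      (\<Sum>q\<in>addresses Y k. v k q * c (representative X p) (representative Y q)) \<le> l k"
    "\<forall>k. l k \<in> {-B..B}"
proof -
  let ?c = "\<lambda>p q. c (representative X p) (representative Y q)"
  define saddle where "saddle k z \<longleftrightarrow> fst (snd z) \<in> prob_vectors (addresses X k)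
    \<and> snd (snd z) \<in> prob_vectors (addresses Y k)
    \<and> (\<forall>q\<in>addresses Y k. fst z \<le> (\<Sum>p\<in>addresses X k. fst (snd z) p * ?c p q))
    \<and> (\<forall>p\<in>addresses X k. (\<Sum>q\<in>addresses Y k. snd (snd z) q * ?c p q) \<le> fst z)
    \<and> fst z \<in> {-B..B}" for k z
  have "\<exists>z. saddle k z" for k
  proof -
    note fin = finite_addresses[OF X(1)] addresses_nonempty[OF X(2)]
      finite_addresses[OF Y(1)] addresses_nonempty[OF Y(2)]
    obtain l w v where w: "w \<in> prob_vectors (addresses X k)" and v: "v \<in> prob_vectors (addresses Y k)"
      and w_ge: "\<forall>q\<in>addresses Y k. l \<le> (\<Sum>p\<in>addresses X k. w p * ?c p q)"
      and v_le: "\<forall>p\<in>addresses X k. (\<Sum>q\<in>addresses Y k. v q * ?c p q) \<le> l"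
      using finite_minimax[OF fin, where c = ?c] unfolding has_game_value_def by blast
    have "\<bar>?c p q\<bar> \<le> B" if "p \<in> addresses X k" "q \<in> addresses Y k" for p q
      using B[OF representative_address(1)[OF that(1)] representative_address(1)[OF that(2)]] .
    then have "l \<in> {-B..B}" by (rule game_value_bounded[OF fin w v w_ge v_le])
    with w v w_ge v_le show ?thesis by (intro exI[of _ "(l, w, v)"]) (simp add: saddle_def)
  qed
  then obtain z where "\<And>k. saddle k (z k)" using choice[of saddle] by blast
  then show ?thesis
    by (intro that[of "\<lambda>k. fst (snd (z k))" "\<lambda>k. snd (snd (z k))" "\<lambda>k. fst (z k)"])
      (simp_all add: saddle_def)
qed

lemma ex_common_convergent_subseq:
  fixes X :: "'a::metric_space set" and Y :: "'b::metric_space set" and l :: "nat \<Rightarrow> real"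
  assumes X: "compact X" "X \<noteq> {}" and Y: "compact Y" "Y \<noteq> {}"
    and w: "\<And>k. w k \<in> prob_vectors (addresses X k)" and v: "\<And>k. v k \<in> prob_vectors (addresses Y k)"
    and l: "\<And>k. l k \<in> {a..b}"
  obtains \<tau> val g h where "strict_mono \<tau>" "(\<lambda>k. l (\<tau> k)) \<longlonglongrightarrow> val"
    "g \<in> borel_measurable borel" "range g \<subseteq> X"
    "AE t in unif. (\<lambda>k. realize X (\<tau> k) (mass X (\<tau> k) (w (\<tau> k))) t) \<longlonglongrightarrow> g t"
    "h \<in> borel_measurable borel" "range h \<subseteq> Y"
    "AE t in unif. (\<lambda>k. realize Y (\<tau> k) (mass Y (\<tau> k) (v (\<tau> k))) t) \<longlonglongrightarrow> h t"
proof -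
  obtain \<sigma>\<^sub>1 g where \<sigma>\<^sub>1: "strict_mono \<sigma>\<^sub>1" and g: "g \<in> borel_measurable borel" "\<And>t. g t \<in> X"
    and g_lim: "AE t in unif. (\<lambda>k. realize X (\<sigma>\<^sub>1 k) (mass X (\<sigma>\<^sub>1 k) (w (\<sigma>\<^sub>1 k))) t) \<longlonglongrightarrow> g t"
    using realize_AE_convergent_subseq[OF X, where lev = "\<lambda>k. k", OF w] by blast
  obtain \<sigma>\<^sub>2 h where \<sigma>\<^sub>2: "strict_mono \<sigma>\<^sub>2" and h: "h \<in> borel_measurable borel" "\<And>t. h t \<in> Y"
    and h_lim: "AE t in unif.
      (\<lambda>k. realize Y (\<sigma>\<^sub>1 (\<sigma>\<^sub>2 k)) (mass Y (\<sigma>\<^sub>1 (\<sigma>\<^sub>2 k)) (v (\<sigma>\<^sub>1 (\<sigma>\<^sub>2 k)))) t) \<longlonglongrightarrow> h t"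
    using realize_AE_convergent_subseq[OF Y, where w = "\<lambda>k. v (\<sigma>\<^sub>1 k)" and lev = \<sigma>\<^sub>1,
        OF v seq_suble[OF \<sigma>\<^sub>1]] by blast
  obtain val \<sigma>\<^sub>3 where \<sigma>\<^sub>3: "strict_mono \<sigma>\<^sub>3" and l_lim: "((\<lambda>k. l (\<sigma>\<^sub>1 (\<sigma>\<^sub>2 k))) \<circ> \<sigma>\<^sub>3) \<longlonglongrightarrow> val"
    using seq_compactE[OF compact_imp_seq_compact[OF compact_Icc], of "\<lambda>k. l (\<sigma>\<^sub>1 (\<sigma>\<^sub>2 k))"] l
    by metis
  have "AE t in unif. (\<lambda>k. realize X (\<sigma>\<^sub>1 (\<sigma>\<^sub>2 (\<sigma>\<^sub>3 k))) (mass X (\<sigma>\<^sub>1 (\<sigma>\<^sub>2 (\<sigma>\<^sub>3 k)))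
      (w (\<sigma>\<^sub>1 (\<sigma>\<^sub>2 (\<sigma>\<^sub>3 k))))) t) \<longlonglongrightarrow> g t"
    using g_lim by eventually_elim
      (drule LIMSEQ_subseq_LIMSEQ[OF _ strict_mono_o[OF \<sigma>\<^sub>2 \<sigma>\<^sub>3]], simp add: o_def)
  moreover have "AE t in unif. (\<lambda>k. realize Y (\<sigma>\<^sub>1 (\<sigma>\<^sub>2 (\<sigma>\<^sub>3 k))) (mass Y (\<sigma>\<^sub>1 (\<sigma>\<^sub>2 (\<sigma>\<^sub>3 k)))
      (v (\<sigma>\<^sub>1 (\<sigma>\<^sub>2 (\<sigma>\<^sub>3 k))))) t) \<longlonglongrightarrow> h t"
    using h_lim by eventually_elim (drule LIMSEQ_subseq_LIMSEQ[OF _ \<sigma>\<^sub>3], simp add: o_def)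
  moreover have "strict_mono (\<lambda>k. \<sigma>\<^sub>1 (\<sigma>\<^sub>2 (\<sigma>\<^sub>3 k)))"
    using strict_mono_o[OF \<sigma>\<^sub>1 strict_mono_o[OF \<sigma>\<^sub>2 \<sigma>\<^sub>3]] by (simp add: o_def)
  moreover have "range g \<subseteq> X" "range h \<subseteq> Y" using g(2) h(2) by auto
  ultimately show ?thesis
    using that[of "\<lambda>k. \<sigma>\<^sub>1 (\<sigma>\<^sub>2 (\<sigma>\<^sub>3 k))" val g h] l_lim g(1) h(1) by (simp add: o_def)
qed

text \<open>The finite games on the nets of depth \<open>k\<close> have values, and their optimal mixed
  strategies, realized on \<open>[0,1)\<close>, converge almost everywhere along a subsequence.\<close>
theorem continuous_minimax:
  fixes c :: "'a::metric_space \<Rightarrow> 'b::metric_space \<Rightarrow> real"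
  assumes X: "compact X" "X \<noteq> {}" and Y: "compact Y" "Y \<noteq> {}"
    and c: "continuous_on UNIV (case_prod c)"
  obtains \<mu> \<nu> val where "\<mu> \<in> PX X" "\<nu> \<in> PX Y"
    "\<And>y. y \<in> Y \<Longrightarrow> val \<le> (\<integral>x. c x y \<partial>\<mu>)" "\<And>x. x \<in> X \<Longrightarrow> (\<integral>y. c x y \<partial>\<nu>) \<le> val"
proof -
  obtain B where B: "\<And>x y. x \<in> X \<Longrightarrow> y \<in> Y \<Longrightarrow> \<bar>c x y\<bar> \<le> B"
    using bounded_kernel[OF c X(1) Y(1)] by blast
  obtain w v l where w: "\<forall>k. w k \<in> prob_vectors (addresses X k)"
    and v: "\<forall>k. v k \<in> prob_vectors (addresses Y k)"
    and w_ge: "\<forall>k. \<forall>q\<in>addresses Y k.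
      l k \<le> (\<Sum>p\<in>addresses X k. w k p * c (representative X p) (representative Y q))"
    and v_le: "\<forall>k. \<forall>p\<in>addresses X k.
      (\<Sum>q\<in>addresses Y k. v k q * c (representative X p) (representative Y q)) \<le> l k"
    and l: "\<forall>k. l k \<in> {-B..B}"
    by (rule ex_discrete_saddles[where c = c, OF X Y B])
  note w = w[rule_format] and v = v[rule_format] and l = l[rule_format]
    and w_ge = w_ge[rule_format] and v_le = v_le[rule_format]
  obtain \<tau> val g h where \<tau>: "strict_mono \<tau>" and l_lim: "(\<lambda>k. l (\<tau> k)) \<longlonglongrightarrow> val"
    and g: "g \<in> borel_measurable borel" "range g \<subseteq> X"
    and g_lim: "AE t in unif. (\<lambda>k. realize X (\<tau> k) (mass X (\<tau> k) (w (\<tau> k))) t) \<longlonglongrightarrow> g t"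
    and h: "h \<in> borel_measurable borel" "range h \<subseteq> Y"
    and h_lim: "AE t in unif. (\<lambda>k. realize Y (\<tau> k) (mass Y (\<tau> k) (v (\<tau> k))) t) \<longlonglongrightarrow> h t"
    by (rule ex_common_convergent_subseq[OF X Y w v l])
  have c': "continuous_on UNIV (\<lambda>(y, x). c x y)"
    using continuous_on_swap_args[of UNIV UNIV c] c by simp
  show ?thesis
  proof
    show "distr unif borel g \<in> PX X" "distr unif borel h \<in> PX Y"
      using g h X(1) Y(1) by (auto intro!: distr_in_PX prob_space_unif compact_imp_closed)
    show "val \<le> (\<integral>x. c x y \<partial>distr unif borel g)" if y: "y \<in> Y" for y
      by (rule LIMSEQ_le[OF l_lim tendsto_sum_realize[OF X w g_lim g(1) c Y(1) y seq_suble[OF \<tau>]]])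
        (use w_ge[OF address_in_addresses[OF y]] in blast)
    show "(\<integral>y. c x y \<partial>distr unif borel h) \<le> val" if x: "x \<in> X" for x
      by (rule LIMSEQ_le[OF tendsto_sum_realize[OF Y v h_lim h(1) c' X(1) x seq_suble[OF \<tau>]] l_lim])
        (use v_le[OF address_in_addresses[OF x]] in blast)
  qed
qed

section \<open>Variance and Wasserstein distance to Dirac measures\<close>

lemma continuous_on_dist_sq: "continuous_on UNIV (\<lambda>(x, y). (dist x y)\<^sup>2)"
  unfolding case_prod_beta' by (intro continuous_intros)

lemma W2sq_eq_integral:
  assumes "\<nu> \<in> PX S" "compact S"
  shows "W2sq x \<nu> = ennreal (\<integral>y. (dist x y)\<^sup>2 \<partial>\<nu>)"
  unfolding W2sq_def
  by (rule nn_integral_eq_integral[OF integrable_PX[OF assms]]) (auto intro!: continuous_intros)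

lemma W2_eq_sqrt: "W2sq x \<nu> = ennreal a \<Longrightarrow> 0 \<le> a \<Longrightarrow> W2 x \<nu> = ennreal (sqrt a)"
  by (simp add: W2_def)

lemma W2_square: "(W2 x \<nu>)\<^sup>2 = W2sq x \<nu>"
proof (cases "W2sq x \<nu> = \<infinity>")
  case True then show ?thesis by (simp add: W2_def power2_eq_square)
next
  case False
  then have "(W2 x \<nu>)\<^sup>2 = ennreal (enn2real (W2sq x \<nu>))"
    by (simp add: W2_def ennreal_power)
  also have "\<dots> = W2sq x \<nu>" using False by (simp add: less_top)
  finally show ?thesis .
qed

lemma Var_nonneg: "0 \<le> Var \<mu>"
  unfolding Var_def by (rule cINF_greatest) (auto intro: integral_nonneg)

lemma Var_le_integral: "Var \<mu> \<le> (\<integral>x. (dist x y)\<^sup>2 \<partial>\<mu>)"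
  unfolding Var_def by (rule cINF_lower) (auto intro: bdd_belowI[of _ 0] integral_nonneg)

lemma ex_countable_dense_subset:
  fixes X :: "'a::metric_space set"
  assumes "compact X"
  obtains D where "countable D" "\<And>x e. x \<in> X \<Longrightarrow> 0 < e \<Longrightarrow> \<exists>d\<in>D. dist x d < e"
proof
  show "countable (\<Union>n. set (net X n))" by (intro countable_UN) (auto intro: countable_finite)
  fix x and e :: real assume "x \<in> X" "0 < e"
  obtain n where "2 * mesh n < e" using ex_mesh_less[OF \<open>0 < e\<close>] by blast
  moreover obtain d where "d \<in> set (net X n)" "dist x d < mesh n"
    using net_covers(2)[OF assms, of n] \<open>x \<in> X\<close> by (force simp: dist_commute)
  ultimately show "\<exists>d\<in>\<Union>n. set (net X n). dist x d < e"
    using mesh_pos[of n] by (intro bexI[of _ d]) auto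
qed

lemma INF_dist_through_dense:
  assumes dense: "\<And>e. 0 < e \<Longrightarrow> \<exists>d\<in>D. dist x d < e"
  shows "(INF d\<in>D. ennreal (dist x d + dist d y)) = ennreal (dist x y)"
proof (rule antisym)
  show "ennreal (dist x y) \<le> (INF d\<in>D. ennreal (dist x d + dist d y))"
    by (rule INF_greatest) (intro ennreal_leI dist_triangle)
  show "(INF d\<in>D. ennreal (dist x d + dist d y)) \<le> ennreal (dist x y)"
  proof (rule ennreal_le_epsilon)
    fix e :: real assume "0 < e"
    then obtain d where d: "d \<in> D" "dist x d < e / 2" using dense[of "e / 2"] by auto
    have "dist d y \<le> dist x d + dist x y" using dist_triangle3[of d y x] by (simp add: dist_commute)
    with d(2) have "ennreal (dist x d + dist d y) \<le> ennreal (dist x y) + ennreal e"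
      using \<open>0 < e\<close> by (simp add: ennreal_plus[symmetric] del: ennreal_plus)
    then show "(INF d\<in>D. ennreal (dist x d + dist d y)) \<le> ennreal (dist x y) + ennreal e"
      by (rule order_trans[OF INF_lower[OF d(1)]])
  qed
qed

text \<open>The product \<open>borel \<Otimes>\<^sub>M borel\<close> may be smaller than the Borel sets of \<open>'a \<times> 'a\<close>,
  so on \<open>X \<times> UNIV\<close> the distance is written as an infimum over a countable dense subset
  of \<open>X\<close> of functions of one variable each.\<close>
lemma borel_measurable_indicator_dist_sq:
  fixes X :: "'a::metric_space set"
  assumes X: "compact X"
  shows "(\<lambda>z::'a \<times> 'a. indicator X (fst z) * ennreal ((dist (fst z) (snd z))\<^sup>2))
    \<in> borel_measurable (borel \<Otimes>\<^sub>M borel)"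
proof -
  obtain D where D: "countable D" "\<And>x e. x \<in> X \<Longrightarrow> 0 < e \<Longrightarrow> \<exists>d\<in>D. dist x d < e"
    using ex_countable_dense_subset[OF X] by blast
  define F where "F z = (INF d\<in>D. ennreal (dist (fst z) d + dist d (snd z)))" for z :: "'a \<times> 'a"
  have "F \<in> borel_measurable (borel \<Otimes>\<^sub>M borel)"
    unfolding F_def
  proof (rule borel_measurable_INF[OF D(1)])
    fix d :: 'a
    have "(\<lambda>x. dist x d) \<in> borel_measurable borel" "(\<lambda>y. dist d y) \<in> borel_measurable borel"
      by (intro borel_measurable_continuous_onI continuous_intros)+
    then have "(\<lambda>z. dist (fst z) d + dist d (snd z)) \<in> borel_measurable (borel \<Otimes>\<^sub>M borel)"
      by (intro borel_measurable_add measurable_compose[OF measurable_fst]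
          measurable_compose[OF measurable_snd])
    then show "(\<lambda>z. ennreal (dist (fst z) d + dist d (snd z))) \<in> borel_measurable (borel \<Otimes>\<^sub>M borel)"
      by (rule measurable_compose[OF _ measurable_ennreal])
  qed
  moreover have "(\<lambda>z. indicator X (fst z)) \<in> borel_measurable (borel \<Otimes>\<^sub>M borel)"
    using compact_imp_closed[OF X]
    by (intro measurable_compose[OF measurable_fst borel_measurable_indicator]) simp
  ultimately have "(\<lambda>z. indicator X (fst z) * F z * F z) \<in> borel_measurable (borel \<Otimes>\<^sub>M borel)"
    by (intro borel_measurable_times_ennreal)
  moreover have "indicator X (fst z) * F z * F z = indicator X (fst z) * ennreal ((dist (fst z) (snd z))\<^sup>2)"
    for z :: "'a \<times> 'a"
    using INF_dist_through_dense[OF D(2), of "fst z" "snd z"]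
    by (cases "fst z \<in> X") (simp_all add: F_def ennreal_mult power2_eq_square)
  ultimately show ?thesis by simp
qed

lemma Var_le_nn_integral_W2sq:
  assumes \<mu>: "\<mu> \<in> PX X" and X: "compact X" and \<nu>: "\<nu> \<in> PM"
  shows "ennreal (Var \<mu>) \<le> (\<integral>\<^sup>+x. W2sq x \<nu> \<partial>\<mu>)"
proof -
  interpret pair_sigma_finite \<mu> \<nu>
    using PX_D(1)[OF \<mu>] PM_D(1)[OF \<nu>] by (intro pair_sigma_finite.intro prob_space_imp_sigma_finite)
  define f where "f z = indicator X (fst z) * ennreal ((dist (fst z) (snd z))\<^sup>2)" for z :: "'a \<times> 'a"
  have f: "f \<in> borel_measurable (\<mu> \<Otimes>\<^sub>M \<nu>)"
    unfolding measurable_cong_sets[OF sets_pair_measure_cong[OF PX_D(2)[OF \<mu>] PM_D(2)[OF \<nu>]] refl] f_def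
    by (rule borel_measurable_indicator_dist_sq[OF X])
  have AE_X: "AE x in \<mu>. x \<in> X" by (rule AE_in_PX[OF \<mu> compact_imp_closed[OF X]])
  have "ennreal (Var \<mu>) \<le> (\<integral>\<^sup>+x. f (x, y) \<partial>\<mu>)" for y
  proof -
    have "(\<integral>\<^sup>+x. f (x, y) \<partial>\<mu>) = (\<integral>\<^sup>+x. ennreal ((dist x y)\<^sup>2) \<partial>\<mu>)"
      using AE_X by (intro nn_integral_cong_AE) (auto simp: f_def elim: eventually_mono)
    also have "\<dots> = ennreal (\<integral>x. (dist x y)\<^sup>2 \<partial>\<mu>)"
      by (rule nn_integral_eq_integral[OF integrable_PX[OF \<mu> X]]) (auto intro!: continuous_intros)
    finally show ?thesis using Var_le_integral[of \<mu> y] by (simp add: ennreal_leI)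
  qed
  then have "(\<integral>\<^sup>+y. ennreal (Var \<mu>) \<partial>\<nu>) \<le> (\<integral>\<^sup>+y. (\<integral>\<^sup>+x. f (x, y) \<partial>\<mu>) \<partial>\<nu>)"
    by (intro nn_integral_mono)
  then have "ennreal (Var \<mu>) \<le> (\<integral>\<^sup>+y. (\<integral>\<^sup>+x. f (x, y) \<partial>\<mu>) \<partial>\<nu>)"
    using prob_space.emeasure_space_1[OF PM_D(1)[OF \<nu>]] by simp
  also have "\<dots> = (\<integral>\<^sup>+x. (\<integral>\<^sup>+y. f (x, y) \<partial>\<nu>) \<partial>\<mu>)" by (rule Fubini[OF f])
  also have "\<dots> = (\<integral>\<^sup>+x. W2sq x \<nu> \<partial>\<mu>)"
    using AE_X by (intro nn_integral_cong_AE) (auto simp: f_def W2sq_def elim: eventually_mono)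
  finally show ?thesis .
qed

lemma ex_borel_measurable_AE_W2sq:
  assumes \<mu>: "\<mu> \<in> PX X" and X: "compact X" and \<nu>: "\<nu> \<in> PM"
  obtains W where "W \<in> borel_measurable \<mu>" "AE x in \<mu>. W x = W2sq x \<nu>"
proof
  interpret pair_sigma_finite \<mu> \<nu>
    using PX_D(1)[OF \<mu>] PM_D(1)[OF \<nu>] by (intro pair_sigma_finite.intro prob_space_imp_sigma_finite)
  define f where "f z = indicator X (fst z) * ennreal ((dist (fst z) (snd z))\<^sup>2)" for z :: "'a \<times> 'a"
  have f: "f \<in> borel_measurable (\<mu> \<Otimes>\<^sub>M \<nu>)"
    unfolding measurable_cong_sets[OF sets_pair_measure_cong[OF PX_D(2)[OF \<mu>] PM_D(2)[OF \<nu>]] refl] f_def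
    by (rule borel_measurable_indicator_dist_sq[OF X])
  show "(\<lambda>x. \<integral>\<^sup>+y. f (x, y) \<partial>\<nu>) \<in> borel_measurable \<mu>"
    using M2.borel_measurable_nn_integral[of "\<lambda>x y. f (x, y)" \<mu>] f by simp
  show "AE x in \<mu>. (\<integral>\<^sup>+y. f (x, y) \<partial>\<nu>) = W2sq x \<nu>"
    using AE_in_PX[OF \<mu> compact_imp_closed[OF X]] by eventually_elim (simp add: f_def W2sq_def)
qed

lemma nn_integral_W2sq_le_SUP:
  assumes \<mu>: "\<mu> \<in> PX X" and "closed X"
  shows "(\<integral>\<^sup>+x. W2sq x \<nu> \<partial>\<mu>) \<le> (SUP x\<in>X. W2sq x \<nu>)"
proof -
  have "(\<integral>\<^sup>+x. W2sq x \<nu> \<partial>\<mu>) \<le> (\<integral>\<^sup>+x. (SUP x\<in>X. W2sq x \<nu>) \<partial>\<mu>)"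
    using AE_in_PX[OF assms] by (intro nn_integral_mono_AE) (auto intro: SUP_upper elim: eventually_mono)
  then show ?thesis using prob_space.emeasure_space_1[OF PX_D(1)[OF \<mu>]] by simp
qed

lemma Var_le_SUP_W2sq:
  assumes "\<mu> \<in> PX X" "compact X" "\<nu> \<in> PM"
  shows "ennreal (Var \<mu>) \<le> (SUP x\<in>X. W2sq x \<nu>)"
  using Var_le_nn_integral_W2sq[OF assms] nn_integral_W2sq_le_SUP[OF assms(1) compact_imp_closed[OF assms(2)]]
  by (rule order_trans)

lemma sqrt_Var_le_SUP_W2:
  assumes "\<mu> \<in> PX X" "compact X" "\<nu> \<in> PM"
  shows "ennreal (sqrt (Var \<mu>)) \<le> (SUP x\<in>X. W2 x \<nu>)"
proof (cases "(SUP x\<in>X. W2 x \<nu>)" rule: ennreal_cases)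
  case (real r)
  have "W2sq x \<nu> \<le> ennreal (r\<^sup>2)" if "x \<in> X" for x
  proof -
    have "(W2 x \<nu>)\<^sup>2 \<le> (ennreal r)\<^sup>2" using SUP_upper[OF that, of "\<lambda>x. W2 x \<nu>"] real by (simp add: power_mono)
    then show ?thesis using real by (simp add: W2_square ennreal_power)
  qed
  then have "ennreal (Var \<mu>) \<le> ennreal (r\<^sup>2)"
    using Var_le_SUP_W2sq[OF assms] by (meson SUP_least order_trans)
  then have "sqrt (Var \<mu>) \<le> r"
    using real real_sqrt_le_mono[of "Var \<mu>" "r\<^sup>2"] by (simp add: ennreal_le_iff)
  then show ?thesis using real by (simp add: ennreal_leI)
next
  case top
  then show ?thesis by (simp only: top_greatest)
qed

lemma AE_eq_if_le_nn_integral: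
  assumes M: "prob_space M" and W: "W \<in> borel_measurable M"
    and le: "AE x in M. W x \<le> ennreal c" and ge: "ennreal c \<le> (\<integral>\<^sup>+x. W x \<partial>M)"
  shows "AE x in M. W x = ennreal c"
proof -
  have "(\<integral>\<^sup>+x. W x \<partial>M) \<le> ennreal c"
    using nn_integral_mono_AE[OF le] prob_space.emeasure_space_1[OF M] by simp
  then have int: "(\<integral>\<^sup>+x. W x \<partial>M) = ennreal c" using ge by (rule antisym)
  have "(\<integral>\<^sup>+x. ennreal c - W x \<partial>M) = (\<integral>\<^sup>+x. ennreal c \<partial>M) - (\<integral>\<^sup>+x. W x \<partial>M)"
    by (rule nn_integral_diff[OF _ W _ le]) (simp_all add: int)
  also have "\<dots> = 0" using prob_space.emeasure_space_1[OF M] int by simp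
  finally have "AE x in M. ennreal c - W x = 0"
    by (subst nn_integral_0_iff_AE[symmetric]) (use W in simp_all)
  then show ?thesis
    using le by eventually_elim (auto dest: ennreal_minus_eq_0 intro: antisym)
qed

text \<open>By \<open>Var_le_nn_integral_W2sq\<close> the average of \<open>W\<^sub>2\<^sup>2(\<delta>\<^sub>x, \<nu>)\<close> over \<open>\<mu>\<close> is at
  least \<open>Var \<mu>\<close>, which is also its supremum over \<open>X\<close>.\<close>
lemma AE_W2_eq_sqrt_Var:
  assumes \<mu>: "\<mu> \<in> PX X" and X: "compact X" and \<nu>: "\<nu> \<in> PM"
    and sup: "(SUP x\<in>X. W2 x \<nu>) = ennreal (sqrt (Var \<mu>))"
  shows "AE x in \<mu>. W2 x \<nu> = ennreal (sqrt (Var \<mu>))"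
proof -
  obtain W where W: "W \<in> borel_measurable \<mu>" and W_eq: "AE x in \<mu>. W x = W2sq x \<nu>"
    using ex_borel_measurable_AE_W2sq[OF \<mu> X \<nu>] by blast
  have "AE x in \<mu>. W x \<le> ennreal (Var \<mu>)"
    using AE_in_PX[OF \<mu> compact_imp_closed[OF X]] W_eq
  proof eventually_elim
    case (elim x)
    have "(W2 x \<nu>)\<^sup>2 \<le> (ennreal (sqrt (Var \<mu>)))\<^sup>2"
      using SUP_upper[OF elim(1), of "\<lambda>x. W2 x \<nu>"] sup by (simp add: power_mono)
    then show ?case using elim(2) Var_nonneg[of \<mu>] by (simp add: W2_square ennreal_power)
  qed
  moreover have "ennreal (Var \<mu>) \<le> (\<integral>\<^sup>+x. W x \<partial>\<mu>)"
    using Var_le_nn_integral_W2sq[OF \<mu> X \<nu>] nn_integral_cong_AE[OF W_eq] by simp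
  ultimately have "AE x in \<mu>. W x = ennreal (Var \<mu>)"
    by (rule AE_eq_if_le_nn_integral[OF PX_D(1)[OF \<mu>] W])
  then show ?thesis
    using W_eq by eventually_elim (auto intro: W2_eq_sqrt Var_nonneg)
qed

section \<open>Circumcenters\<close>

lemma bdd_above_integral_dist_sq:
  assumes X: "compact X" and \<nu>: "\<nu> \<in> PX S" and S: "compact S"
  shows "bdd_above ((\<lambda>x. \<integral>y. (dist x y)\<^sup>2 \<partial>\<nu>) ` X)"
proof -
  obtain D where D: "\<And>x y. x \<in> X \<Longrightarrow> y \<in> S \<Longrightarrow> \<bar>(dist x y)\<^sup>2\<bar> \<le> D"
    using bounded_kernel[OF continuous_on_dist_sq X S] by blast
  have "(\<integral>y. (dist x y)\<^sup>2 \<partial>\<nu>) \<le> D" if "x \<in> X" for x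
    using D[OF that] compact_imp_closed[OF S]
    by (intro integral_le_PX[OF \<nu>] integrable_PX[OF \<nu> S]) (auto intro!: continuous_intros)
  then show ?thesis by (rule bdd_aboveI2)
qed

text \<open>The game with payoff \<open>d\<^sup>2(x, y)\<close>, \<open>x \<in> X\<close>, \<open>y \<in> conv X\<close>, has optimal strategies
  \<open>\<mu>\<close> and \<open>\<nu>\<close>; since the barycenter of \<open>\<mu>\<close> is an admissible pure strategy, the value is at
  most \<open>Var \<mu>\<close>.\<close>
lemma ex_Var_saddle:
  fixes X :: "'a::metric_space set"
  assumes X: "compact X" "X \<noteq> {}" and bary: "\<forall>\<mu>\<in>PX X. \<exists>y. barycenter \<mu> y"
    and Y: "compact (conv X)"
  obtains \<mu> \<nu> where "\<mu> \<in> PX X" "\<nu> \<in> PX (conv X)" "\<forall>x\<in>X. (\<integral>y. (dist x y)\<^sup>2 \<partial>\<nu>) \<le> Var \<mu>"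
proof -
  obtain x\<^sub>0 where "x\<^sub>0 \<in> X" using X(2) by blast
  then have "return borel x\<^sub>0 \<in> PX X"
    using compact_imp_closed[OF X(1)] by (auto simp: PX_def PM_def prob_space_return emeasure_return)
  moreover obtain b\<^sub>0 where "barycenter (return borel x\<^sub>0) b\<^sub>0"
    using bary \<open>return borel x\<^sub>0 \<in> PX X\<close> by blast
  ultimately have "conv X \<noteq> {}" by (auto simp: conv_def)
  obtain \<mu> \<nu> val where \<mu>: "\<mu> \<in> PX X" and \<nu>: "\<nu> \<in> PX (conv X)"
    and val_le: "\<And>y. y \<in> conv X \<Longrightarrow> val \<le> (\<integral>x. (dist x y)\<^sup>2 \<partial>\<mu>)"
    and le_val: "\<And>x. x \<in> X \<Longrightarrow> (\<integral>y. (dist x y)\<^sup>2 \<partial>\<nu>) \<le> val"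
    using continuous_minimax[OF X Y \<open>conv X \<noteq> {}\<close> continuous_on_dist_sq] by blast
  obtain b where "barycenter \<mu> b" using bary \<mu> by blast
  then have "val \<le> Var \<mu>"
    using val_le[of b] \<mu> by (auto simp: barycenter_def conv_def)
  then show ?thesis using le_val by (intro that[OF \<mu> \<nu>]) (auto intro: order_trans)
qed

lemma circumcenter_if_Var_saddle:
  assumes X: "compact X" and \<mu>: "\<mu> \<in> PX X" and \<nu>: "\<nu> \<in> PX S" and S: "compact S"
    and le: "\<forall>x\<in>X. (\<integral>y. (dist x y)\<^sup>2 \<partial>\<nu>) \<le> Var \<mu>"
  shows "circumradius X = ennreal (sqrt (Var \<mu>))" "circumcenter X \<nu>"
    and "\<forall>\<mu>'\<in>PX X. Var \<mu>' \<le> Var \<mu>"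
proof -
  have "W2 x \<nu> \<le> ennreal (sqrt (Var \<mu>))" if "x \<in> X" for x
  proof -
    have "W2 x \<nu> = ennreal (sqrt (\<integral>y. (dist x y)\<^sup>2 \<partial>\<nu>))"
      by (rule W2_eq_sqrt[OF W2sq_eq_integral[OF \<nu> S]]) (simp add: integral_nonneg)
    also have "\<dots> \<le> ennreal (sqrt (Var \<mu>))" using le that by (intro ennreal_leI real_sqrt_le_mono) auto
    finally show ?thesis .
  qed
  then have sup_le: "(SUP x\<in>X. W2 x \<nu>) \<le> ennreal (sqrt (Var \<mu>))" by (rule SUP_least)
  have R_le: "circumradius X \<le> (SUP x\<in>X. W2 x \<nu>)"
    unfolding circumradius_def by (rule INF_lower[OF PX_imp_PM[OF \<nu>]])
  have "ennreal (sqrt (Var \<mu>)) \<le> circumradius X"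
    unfolding circumradius_def by (rule INF_greatest) (rule sqrt_Var_le_SUP_W2[OF \<mu> X])
  with R_le sup_le show "circumradius X = ennreal (sqrt (Var \<mu>))" by simp
  with R_le sup_le show "circumcenter X \<nu>"
    using PX_imp_PM[OF \<nu>] by (simp add: circumcenter_def)
  show "\<forall>\<mu>'\<in>PX X. Var \<mu>' \<le> Var \<mu>"
  proof
    fix \<mu>' assume "\<mu>' \<in> PX X"
    then have "ennreal (sqrt (Var \<mu>')) \<le> ennreal (sqrt (Var \<mu>))"
      using order_trans[OF sqrt_Var_le_SUP_W2[OF _ X PX_imp_PM[OF \<nu>]] sup_le] by blast
    then have "sqrt (Var \<mu>') \<le> sqrt (Var \<mu>)" by (simp add: ennreal_le_iff Var_nonneg)
    then show "Var \<mu>' \<le> Var \<mu>" by simp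
  qed
qed

lemma AVar_min_if_Var_saddle:
  assumes X: "compact X" "X \<noteq> {}" and \<mu>: "\<mu> \<in> PX X" and \<nu>: "\<nu> \<in> PX S" and S: "compact S"
    and le: "\<forall>x\<in>X. (\<integral>y. (dist x y)\<^sup>2 \<partial>\<nu>) \<le> Var \<mu>"
  shows "AVar X \<nu> = Var \<mu>" "\<forall>\<nu>'\<in>PX S. AVar X \<nu> \<le> AVar X \<nu>'"
proof -
  have Var_le: "Var \<mu> \<le> AVar X \<nu>'" if \<nu>': "\<nu>' \<in> PX S" for \<nu>'
  proof -
    have "W2sq x \<nu>' \<le> ennreal (AVar X \<nu>')" if "x \<in> X" for x
      unfolding W2sq_eq_integral[OF \<nu>' S] AVar_def
      by (intro ennreal_leI cSUP_upper that bdd_above_integral_dist_sq[OF X(1) \<nu>' S])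
    then have "ennreal (Var \<mu>) \<le> ennreal (AVar X \<nu>')"
      using Var_le_SUP_W2sq[OF \<mu> X(1) PX_imp_PM[OF \<nu>']] by (meson SUP_least order_trans)
    moreover obtain x\<^sub>0 where "x\<^sub>0 \<in> X" using X(2) by blast
    then have "0 \<le> AVar X \<nu>'"
      unfolding AVar_def
      by (intro order_trans[OF integral_nonneg_AE cSUP_upper[OF \<open>x\<^sub>0 \<in> X\<close>]]
          bdd_above_integral_dist_sq[OF X(1) \<nu>' S]) auto
    ultimately show ?thesis by (simp add: ennreal_le_iff)
  qed
  have "AVar X \<nu> \<le> Var \<mu>" unfolding AVar_def using X(2) le by (intro cSUP_least) auto
  with Var_le[OF \<nu>] show "AVar X \<nu> = Var \<mu>" by simp
  with Var_le show "\<forall>\<nu>'\<in>PX S. AVar X \<nu> \<le> AVar X \<nu>'" by simp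
qed

lemma AE_W2_eq_circumradius:
  assumes X: "compact X" and \<mu>: "\<mu> \<in> PX X" and R: "circumradius X = ennreal (sqrt (Var \<mu>))"
    and \<nu>: "circumcenter X \<nu>"
  shows "AE x in \<mu>. W2 x \<nu> = circumradius X"
  using AE_W2_eq_sqrt_Var[OF \<mu> X] \<nu> R by (simp add: circumcenter_def)

theorem theorem3p1:
  fixes X :: "'a::complete_space set"
  assumes "compact X" and "X \<noteq> {}"
    and "\<forall>\<mu>\<in>PX X. \<exists>y. barycenter \<mu> y"
    and "compact (conv X)"
  shows "\<exists>\<nu>. circumcenter X \<nu>
      \<and> (\<exists>\<mu>\<in>PX X. (\<forall>\<mu>'\<in>PX X. Var \<mu>' \<le> Var \<mu>) \<and> (circumradius X)\<^sup>2 = ennreal (Var \<mu>))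
      \<and> (\<exists>\<nu>'\<in>PX (conv X). (\<forall>\<nu>''\<in>PX (conv X). AVar X \<nu>' \<le> AVar X \<nu>'')
            \<and> (circumradius X)\<^sup>2 = ennreal (AVar X \<nu>'))
      \<and> (\<forall>\<mu>\<in>PX X. (\<forall>\<mu>'\<in>PX X. Var \<mu>' \<le> Var \<mu>) \<longrightarrow>
            (AE x in \<mu>. W2 x \<nu> = circumradius X)
          \<and> (\<forall>\<nu>'. circumcenter X \<nu>' \<longrightarrow> (AE x in \<mu>. W2 x \<nu>' = circumradius X)))"
proof -
  obtain \<mu> \<nu> where \<mu>: "\<mu> \<in> PX X" and \<nu>: "\<nu> \<in> PX (conv X)"
    and le: "\<forall>x\<in>X. (\<integral>y. (dist x y)\<^sup>2 \<partial>\<nu>) \<le> Var \<mu>"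
    using ex_Var_saddle[OF assms] by blast
  note circ = circumcenter_if_Var_saddle[OF assms(1) \<mu> \<nu> assms(4) le]
  note AVar = AVar_min_if_Var_saddle[OF assms(1,2) \<mu> \<nu> assms(4) le]
  have R\<^sub>2: "(circumradius X)\<^sup>2 = ennreal (Var \<mu>)"
    using circ(1) Var_nonneg[of \<mu>] by (simp add: ennreal_power)
  have R_max: "circumradius X = ennreal (sqrt (Var \<mu>'))"
    if "\<mu>' \<in> PX X" "\<forall>\<mu>''\<in>PX X. Var \<mu>'' \<le> Var \<mu>'" for \<mu>'
    using that circ(1,3) \<mu> by (metis order_antisym)
  show ?thesis
  proof (intro exI[of _ \<nu>] conjI)
    show "\<exists>\<mu>\<in>PX X. (\<forall>\<mu>'\<in>PX X. Var \<mu>' \<le> Var \<mu>) \<and> (circumradius X)\<^sup>2 = ennreal (Var \<mu>)"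
      using \<mu> circ(3) R\<^sub>2 by blast
    show "\<exists>\<nu>'\<in>PX (conv X). (\<forall>\<nu>''\<in>PX (conv X). AVar X \<nu>' \<le> AVar X \<nu>'')
        \<and> (circumradius X)\<^sup>2 = ennreal (AVar X \<nu>')"
      using AVar R\<^sub>2 by (intro bexI[OF _ \<nu>]) auto
    show "\<forall>\<mu>'\<in>PX X. (\<forall>\<mu>''\<in>PX X. Var \<mu>'' \<le> Var \<mu>') \<longrightarrow> (AE x in \<mu>'. W2 x \<nu> = circumradius X)
        \<and> (\<forall>\<nu>'. circumcenter X \<nu>' \<longrightarrow> (AE x in \<mu>'. W2 x \<nu>' = circumradius X))"
      using AE_W2_eq_circumradius[OF assms(1) _ R_max] circ(2) by blast
  qed (rule circ(2))
qed

end
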